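(* Let $S$ be an atomic base, let $\Gamma = x_1:A_1,\dots,x_n:A_n$ be a context and let $t$ be a term with $tFV(t)\subseteq\{x_1,\dots,x_n\}$. If the term $t$ of $A$ from $\Gamma$ is I-valid (with respect to $S$), then there is a normal proof-term $s$ (with respect to $S$) such that $t\twoheadrightarrow s$ and $\Gamma\vdash s:A$ is derivable in $\mathbf{IL}_{\mathbf{at}}$.
   Context: System $\mathbf{IL}_{\mathbf{at}}$. Formulas: $A,B ::= X \mid A\to B \mid \forall X.A$, $X$ an atom. Terms: $t,s ::= x \mid c^A \mid \lambda x.t \mid ts \mid \Lambda X.t \mid tX$ ($x$ term-variable, $c^A$ a term-constant for each formula $A$, $X$ an atom). Terms/formulas up to $\alpha$-equivalence; capture-avoiding substitutions $t[x:=s]$, $t[X:=Y]$, $A[X:=B]$; $t[\vec{t_i}]$ is simultaneous substitution $t[x_1:=t_1,\dots,x_n:=t_n]$. $tFV(t)$: free term-variables; a term is closed if $tFV(t)=\emptyset$. A context is a finite set $x_1:A_1,\dots,x_n:A_n$ of distinct variables; $PFV(\Gamma)$ the propositional variables free in the $A_i$. Derivability of $\Gamma\vdash t:A$: $\Gamma,x:A\vdash x:A$; $\Gamma\vdash c^A:A$; $\to$-introduction ($\Gamma,x:A\vdash t:B$ gives $\Gamma\vdash\lambda x.t:A\to B$); $\to$-elimination ($\Gamma\vdash t:A\to B$, $\Gamma\vdash s:A$ give $\Gamma\vdash ts:B$); $\forall$-introduction ($\Gamma\vdash t:A$, $X\notin PFV(\Gamma)$ give $\Gamma\vdash \Lambda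 X.t:\forall X.A$); $\forall$-elimination ($\Gamma\vdash t:\forall X.A$ gives $\Gamma\vdash tY:A[X:=Y]$ for any atom $Y$). $\beta$-reduction: $(\lambda x.t)s\to_\beta t[x:=s]$, $(\Lambda X.t)Y\to_\beta t[X:=Y]$, closed under all term contexts. Normal = containing no such redex. $\twoheadrightarrow$ = reflexive-transitive closure of $\to_\beta$. An atomic base $S$ is a set of term-constants $c^X$ for atoms $X$; a proof-term is a term containing no term-constant other than those $c^X\in S$. qI-validity: (1) a closed term $t$ of an atom $X$ is qI-valid iff $t\twoheadrightarrow s$ for some normal $s$ with $\vdash s:X$ derivable; (2) a closed term $t$ of $B\to C$ is qI-valid iff $t\twoheadrightarrow\lambda x.u$ for some $u$ such that $u[x:=s]$ of $C$ is qI-valid for every qI-valid closed term $s$ of $B$; (3) a closed term $t$ of $\forall X.A$ is qI-valid iff $t\twoheadrightarrow\Lambda X.u$ for some $u$ such that $u[X:=Y]$ of $A[X:=Y]$ is qI-valid for every atom $Y$; (4) a term $t$ of $A$ from $x_1:A_1,\dots,x_n:A_n$ with $tFV(t)\subseteq\{x_1,\dots,x_n\}$ is qI-valid iff $t[\vec{t_i}]$ of $A$ is qI-valid for all qI-valid closed terms $t_i$ of $A_i$. A term is I-valid iff it is a proof-term and qI-valid. *)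

theory Defs
  imports Main
begin

text \<open>System IL_at in locally nameless representation: free term-variables and
free atoms are names (nat), bound ones are de Bruijn indices. This gives terms and
formulas up to alpha-equivalence.\<close>

datatype atm = FA nat | BA nat

datatype form = At atm | Imp form form | All form

datatype trm = FV nat | BV nat | Con form | Lam trm | App trm trm | TLam trm | TApp trm atm

fun lca :: "nat \<Rightarrow> atm \<Rightarrow> bool" where
  "lca j (FA X) = True"
| "lca j (BA i) = (i < j)"

fun lcf :: "nat \<Rightarrow> form \<Rightarrow> bool" where
  "lcf j (At a) = lca j a"
| "lcf j (Imp A B) = (lcf j A \<and> lcf j B)"
| "lcf j (All A) = lcf (Suc j) A"

fun lct :: "nat \<Rightarrow> nat \<Rightarrow> trm \<Rightarrow> bool" where
  "lct k j (FV x) = True"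
| "lct k j (BV i) = (i < k)"
| "lct k j (Con A) = lcf j A"
| "lct k j (Lam t) = lct (Suc k) j t"
| "lct k j (App t s) = (lct k j t \<and> lct k j s)"
| "lct k j (TLam t) = lct k (Suc j) t"
| "lct k j (TApp t a) = (lct k j t \<and> lca j a)"

definition wf_form :: "form \<Rightarrow> bool" where "wf_form A = lcf 0 A"
definition wf_trm :: "trm \<Rightarrow> bool" where "wf_trm t = lct 0 0 t"

fun afv :: "atm \<Rightarrow> nat set" where
  "afv (FA X) = {X}" | "afv (BA i) = {}"

fun ffv :: "form \<Rightarrow> nat set" where
  "ffv (At a) = afv a"
| "ffv (Imp A B) = ffv A \<union> ffv B"
| "ffv (All A) = ffv A"

fun tFV :: "trm \<Rightarrow> nat set" where
  "tFV (FV x) = {x}"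
| "tFV (BV i) = {}"
| "tFV (Con A) = {}"
| "tFV (Lam t) = tFV t"
| "tFV (App t s) = tFV t \<union> tFV s"
| "tFV (TLam t) = tFV t"
| "tFV (TApp t a) = tFV t"

type_synonym ctx = "nat \<rightharpoonup> form"

definition PFV :: "ctx \<Rightarrow> nat set" where
  "PFV \<Gamma> = (\<Union>A\<in>ran \<Gamma>. ffv A)"

definition wf_ctx :: "ctx \<Rightarrow> bool" where
  "wf_ctx \<Gamma> = (finite (dom \<Gamma>) \<and> (\<forall>A\<in>ran \<Gamma>. wf_form A))"

definition closed :: "trm \<Rightarrow> bool" where
  "closed t = (wf_trm t \<and> tFV t = {})"

fun aopen :: "nat \<Rightarrow> nat \<Rightarrow> atm \<Rightarrow> atm" where
  "aopen j Y (FA X) = FA X"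
| "aopen j Y (BA i) = (if i = j then FA Y else BA i)"

fun fopen :: "nat \<Rightarrow> nat \<Rightarrow> form \<Rightarrow> form" where
  "fopen j Y (At a) = At (aopen j Y a)"
| "fopen j Y (Imp A B) = Imp (fopen j Y A) (fopen j Y B)"
| "fopen j Y (All A) = All (fopen (Suc j) Y A)"

fun aclose :: "nat \<Rightarrow> nat \<Rightarrow> atm \<Rightarrow> atm" where
  "aclose j X (FA Z) = (if Z = X then BA j else FA Z)"
| "aclose j X (BA i) = BA i"

fun fclose :: "nat \<Rightarrow> nat \<Rightarrow> form \<Rightarrow> form" where
  "fclose j X (At a) = At (aclose j X a)"
| "fclose j X (Imp A B) = Imp (fclose j X A) (fclose j X B)"
| "fclose j X (All A) = All (fclose (Suc j) X A)"

fun topen :: "nat \<Rightarrow> trm \<Rightarrow> trm \<Rightarrow> trm" where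
  "topen k u (FV x) = FV x"
| "topen k u (BV i) = (if i = k then u else BV i)"
| "topen k u (Con A) = Con A"
| "topen k u (Lam t) = Lam (topen (Suc k) u t)"
| "topen k u (App t s) = App (topen k u t) (topen k u s)"
| "topen k u (TLam t) = TLam (topen k u t)"
| "topen k u (TApp t a) = TApp (topen k u t) a"

fun ttopen :: "nat \<Rightarrow> nat \<Rightarrow> trm \<Rightarrow> trm" where
  "ttopen j Y (FV x) = FV x"
| "ttopen j Y (BV i) = BV i"
| "ttopen j Y (Con A) = Con (fopen j Y A)"
| "ttopen j Y (Lam t) = Lam (ttopen j Y t)"
| "ttopen j Y (App t s) = App (ttopen j Y t) (ttopen j Y s)"
| "ttopen j Y (TLam t) = TLam (ttopen (Suc j) Y t)"
| "ttopen j Y (TApp t a) = TApp (ttopen j Y t) (aopen j Y a)"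

fun tclose :: "nat \<Rightarrow> nat \<Rightarrow> trm \<Rightarrow> trm" where
  "tclose k x (FV y) = (if y = x then BV k else FV y)"
| "tclose k x (BV i) = BV i"
| "tclose k x (Con A) = Con A"
| "tclose k x (Lam t) = Lam (tclose (Suc k) x t)"
| "tclose k x (App t s) = App (tclose k x t) (tclose k x s)"
| "tclose k x (TLam t) = TLam (tclose k x t)"
| "tclose k x (TApp t a) = TApp (tclose k x t) a"

fun ttclose :: "nat \<Rightarrow> nat \<Rightarrow> trm \<Rightarrow> trm" where
  "ttclose j X (FV x) = FV x"
| "ttclose j X (BV i) = BV i"
| "ttclose j X (Con A) = Con (fclose j X A)"
| "ttclose j X (Lam t) = Lam (ttclose j X t)"
| "ttclose j X (App t s) = App (ttclose j X t) (ttclose j X s)"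
| "ttclose j X (TLam t) = TLam (ttclose (Suc j) X t)"
| "ttclose j X (TApp t a) = TApp (ttclose j X t) (aclose j X a)"

text \<open>Simultaneous substitution of terms for free term-variables
(capture-free, since substituted terms are locally closed).\<close>
fun psubst :: "(nat \<Rightarrow> trm) \<Rightarrow> trm \<Rightarrow> trm" where
  "psubst \<sigma> (FV x) = \<sigma> x"
| "psubst \<sigma> (BV i) = BV i"
| "psubst \<sigma> (Con A) = Con A"
| "psubst \<sigma> (Lam t) = Lam (psubst \<sigma> t)"
| "psubst \<sigma> (App t s) = App (psubst \<sigma> t) (psubst \<sigma> s)"
| "psubst \<sigma> (TLam t) = TLam (psubst \<sigma> t)"
| "psubst \<sigma> (TApp t a) = TApp (psubst \<sigma> t) a"

inductive derivable :: "ctx \<Rightarrow> trm \<Rightarrow> form \<Rightarrow> bool" where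
  ax: "wf_ctx \<Gamma> \<Longrightarrow> \<Gamma> x = Some A \<Longrightarrow> derivable \<Gamma> (FV x) A"
| const: "wf_ctx \<Gamma> \<Longrightarrow> wf_form A \<Longrightarrow> derivable \<Gamma> (Con A) A"
| impI: "x \<notin> dom \<Gamma> \<Longrightarrow> wf_form A \<Longrightarrow> derivable (\<Gamma>(x \<mapsto> A)) t B
          \<Longrightarrow> derivable \<Gamma> (Lam (tclose 0 x t)) (Imp A B)"
| impE: "derivable \<Gamma> t (Imp A B) \<Longrightarrow> derivable \<Gamma> s A \<Longrightarrow> derivable \<Gamma> (App t s) B"
| allI: "derivable \<Gamma> t A \<Longrightarrow> X \<notin> PFV \<Gamma>
          \<Longrightarrow> derivable \<Gamma> (TLam (ttclose 0 X t)) (All (fclose 0 X A))"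
| allE: "derivable \<Gamma> t (All A) \<Longrightarrow> derivable \<Gamma> (TApp t (FA Y)) (fopen 0 Y A)"

inductive beta :: "trm \<Rightarrow> trm \<Rightarrow> bool" where
  beta_lam: "wf_trm (App (Lam t) s) \<Longrightarrow> beta (App (Lam t) s) (topen 0 s t)"
| beta_tlam: "wf_trm (TApp (TLam t) (FA Y)) \<Longrightarrow> beta (TApp (TLam t) (FA Y)) (ttopen 0 Y t)"
| cong_lam: "beta t t' \<Longrightarrow> beta (Lam (tclose 0 x t)) (Lam (tclose 0 x t'))"
| cong_appL: "beta t t' \<Longrightarrow> wf_trm s \<Longrightarrow> beta (App t s) (App t' s)"
| cong_appR: "beta s s' \<Longrightarrow> wf_trm t \<Longrightarrow> beta (App t s) (App t s')"
| cong_tlam: "beta t t' \<Longrightarrow> beta (TLam (ttclose 0 X t)) (TLam (ttclose 0 X t'))"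
| cong_tapp: "beta t t' \<Longrightarrow> beta (TApp t (FA Y)) (TApp t' (FA Y))"

abbreviation betas :: "trm \<Rightarrow> trm \<Rightarrow> bool" where
  "betas \<equiv> beta\<^sup>*\<^sup>*"

fun normal :: "trm \<Rightarrow> bool" where
  "normal (FV x) = True"
| "normal (BV i) = True"
| "normal (Con A) = True"
| "normal (Lam t) = normal t"
| "normal (App t s) = ((\<forall>b. t \<noteq> Lam b) \<and> normal t \<and> normal s)"
| "normal (TLam t) = normal t"
| "normal (TApp t a) = ((\<forall>b. t \<noteq> TLam b) \<and> normal t)"

text \<open>An atomic base is given by the set S of atoms X such that c^X is in the base.\<close>
fun proof_term :: "nat set \<Rightarrow> trm \<Rightarrow> bool" where
  "proof_term S (FV x) = True"
| "proof_term S (BV i) = True"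
| "proof_term S (Con A) = (\<exists>X\<in>S. A = At (FA X))"
| "proof_term S (Lam t) = proof_term S t"
| "proof_term S (App t s) = (proof_term S t \<and> proof_term S s)"
| "proof_term S (TLam t) = proof_term S t"
| "proof_term S (TApp t a) = proof_term S t"

lemma size_fopen[simp]: "size (fopen j Y A) = size A"
proof (induction A arbitrary: j)
  case (At a) then show ?case by (cases a) auto
qed auto

function qIv :: "form \<Rightarrow> trm \<Rightarrow> bool" where
  "qIv (At a) t = (\<exists>s. betas t s \<and> normal s \<and> derivable Map.empty s (At a))"
| "qIv (Imp B C) t = (\<exists>u. betas t (Lam u) \<and>
      (\<forall>s. closed s \<and> qIv B s \<longrightarrow> qIv C (topen 0 s u)))"
| "qIv (All A) t = (\<exists>u. betas t (TLam u) \<and>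
      (\<forall>Y. qIv (fopen 0 Y A) (ttopen 0 Y u)))"
  by pat_completeness auto
termination by (relation "measure (\<lambda>(A, t). size A)") auto

definition qIv_ctx :: "ctx \<Rightarrow> trm \<Rightarrow> form \<Rightarrow> bool" where
  "qIv_ctx \<Gamma> t A = (\<forall>\<sigma>. (\<forall>x\<in>dom \<Gamma>. closed (\<sigma> x) \<and> qIv (the (\<Gamma> x)) (\<sigma> x))
      \<longrightarrow> qIv A (psubst \<sigma> t))"

definition I_valid :: "nat set \<Rightarrow> ctx \<Rightarrow> trm \<Rightarrow> form \<Rightarrow> bool" where
  "I_valid S \<Gamma> t A = (proof_term S t \<and> qIv_ctx \<Gamma> t A)"

end

(*
  qI-validity is a logical relation, so the reflection/reification argument of
  normalization by evaluation applies: by induction on formulas, the eta-expansion of a closed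
  term reducing to a neutral normal term of type C is qI-valid at C (reflection), and every
  closed qI-valid term of C reduces to a normal term derivable at C (reification).

  For a context, each variable x : B is instantiated by the eta-expansion of the marker
  c^((\<forall>Y. x) \<rightarrow> B) c^(\<forall>Y. x), which is closed, neutral, normal and of type B, hence
  qI-valid by reflection. So the instance of t is qI-valid and reifies to a normal derivable v.
  Every reduction step of the instance is matched by at most one step of t itself, the markers
  standing for the variables; the reduct of t obtained this way is normal since v is, derivable
  in the context since v is derivable, and a proof-term since t is.
*)
theory Submission
  imports Defs "HOL-Combinatorics.Transposition"
begin

section \<open>Locally nameless infrastructure\<close>

fun ashift :: "nat \<Rightarrow> atm \<Rightarrow> atm" where
  "ashift c (FA X) = FA X"
| "ashift c (BA i) = (if i < c then BA i else BA (Suc i))"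

fun fshift :: "nat \<Rightarrow> form \<Rightarrow> form" where
  "fshift c (At a) = At (ashift c a)"
| "fshift c (Imp A B) = Imp (fshift c A) (fshift c B)"
| "fshift c (All A) = All (fshift (Suc c) A)"

fun tshift :: "nat \<Rightarrow> trm \<Rightarrow> trm" where
  "tshift c (FV x) = FV x"
| "tshift c (BV i) = (if i < c then BV i else BV (Suc i))"
| "tshift c (Con A) = Con A"
| "tshift c (Lam t) = Lam (tshift (Suc c) t)"
| "tshift c (App t s) = App (tshift c t) (tshift c s)"
| "tshift c (TLam t) = TLam (tshift c t)"
| "tshift c (TApp t a) = TApp (tshift c t) a"

fun ttshift :: "nat \<Rightarrow> trm \<Rightarrow> trm" where
  "ttshift c (FV x) = FV x"
| "ttshift c (BV i) = BV i"
| "ttshift c (Con A) = Con (fshift c A)"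
| "ttshift c (Lam t) = Lam (ttshift c t)"
| "ttshift c (App t s) = App (ttshift c t) (ttshift c s)"
| "ttshift c (TLam t) = TLam (ttshift (Suc c) t)"
| "ttshift c (TApp t a) = TApp (ttshift c t) (ashift c a)"

fun tatoms :: "trm \<Rightarrow> nat set" where
  "tatoms (FV x) = {}"
| "tatoms (BV i) = {}"
| "tatoms (Con A) = ffv A"
| "tatoms (Lam t) = tatoms t"
| "tatoms (App t s) = tatoms t \<union> tatoms s"
| "tatoms (TLam t) = tatoms t"
| "tatoms (TApp t a) = tatoms t \<union> afv a"

fun con_atoms :: "trm \<Rightarrow> nat set" where
  "con_atoms (FV x) = {}"
| "con_atoms (BV i) = {}"
| "con_atoms (Con A) = ffv A"
| "con_atoms (Lam t) = con_atoms t"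
| "con_atoms (App t s) = con_atoms t \<union> con_atoms s"
| "con_atoms (TLam t) = con_atoms t"
| "con_atoms (TApp t a) = con_atoms t"

fun tswap :: "nat \<Rightarrow> nat \<Rightarrow> trm \<Rightarrow> trm" where
  "tswap a b (FV x) = FV (transpose a b x)"
| "tswap a b (BV i) = BV i"
| "tswap a b (Con A) = Con A"
| "tswap a b (Lam t) = Lam (tswap a b t)"
| "tswap a b (App t s) = App (tswap a b t) (tswap a b s)"
| "tswap a b (TLam t) = TLam (tswap a b t)"
| "tswap a b (TApp t c) = TApp (tswap a b t) c"

fun aswap :: "nat \<Rightarrow> nat \<Rightarrow> atm \<Rightarrow> atm" where
  "aswap a b (FA X) = FA (transpose a b X)"
| "aswap a b (BA i) = BA i"

fun fswap :: "nat \<Rightarrow> nat \<Rightarrow> form \<Rightarrow> form" where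
  "fswap a b (At c) = At (aswap a b c)"
| "fswap a b (Imp A B) = Imp (fswap a b A) (fswap a b B)"
| "fswap a b (All A) = All (fswap a b A)"

fun ttswap :: "nat \<Rightarrow> nat \<Rightarrow> trm \<Rightarrow> trm" where
  "ttswap a b (FV x) = FV x"
| "ttswap a b (BV i) = BV i"
| "ttswap a b (Con A) = Con (fswap a b A)"
| "ttswap a b (Lam t) = Lam (ttswap a b t)"
| "ttswap a b (App t s) = App (ttswap a b t) (ttswap a b s)"
| "ttswap a b (TLam t) = TLam (ttswap a b t)"
| "ttswap a b (TApp t c) = TApp (ttswap a b t) (aswap a b c)"

lemma lca_mono: "lca j a \<Longrightarrow> j \<le> j' \<Longrightarrow> lca j' a"
  by (cases a) auto

lemma lcf_mono: "lcf j A \<Longrightarrow> j \<le> j' \<Longrightarrow> lcf j' A"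
  by (induction A arbitrary: j j') (auto intro: lca_mono)

lemma lct_mono: "lct k j t \<Longrightarrow> k \<le> k' \<Longrightarrow> j \<le> j' \<Longrightarrow> lct k' j' t"
  by (induction t arbitrary: k j k' j') (auto intro: lca_mono lcf_mono)

lemma aopen_lca_id: "lca j a \<Longrightarrow> j \<le> j' \<Longrightarrow> aopen j' Y a = a"
  by (cases a) auto

lemma fopen_lcf_id: "lcf j A \<Longrightarrow> j \<le> j' \<Longrightarrow> fopen j' Y A = A"
  by (induction A arbitrary: j j') (auto simp: aopen_lca_id)

lemma topen_lct_id: "lct k j t \<Longrightarrow> k \<le> k' \<Longrightarrow> topen k' u t = t"
  by (induction t arbitrary: k j k') auto

lemma ttopen_lct_id: "lct k j t \<Longrightarrow> j \<le> j' \<Longrightarrow> ttopen j' Y t = t"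
  by (induction t arbitrary: k j j') (auto simp: fopen_lcf_id aopen_lca_id)

lemma lca_aopen: "lca (Suc j) a \<Longrightarrow> lca j (aopen j Y a)"
  by (cases a) auto

lemma lcf_fopen: "lcf (Suc j) A \<Longrightarrow> lcf j (fopen j Y A)"
  by (induction A arbitrary: j) (auto simp: lca_aopen)

lemma lct_topen: "lct (Suc k) j t \<Longrightarrow> lct k j u \<Longrightarrow> lct k j (topen k u t)"
proof (induction t arbitrary: k j u)
  case (Lam t)
  then show ?case using lct_mono[of k j u "Suc k" j] by auto
next
  case (TLam t)
  then show ?case using lct_mono[of k j u k "Suc j"] by auto
qed auto

lemma lct_ttopen: "lct k (Suc j) t \<Longrightarrow> lct k j (ttopen j Y t)"
  by (induction t arbitrary: k j) (auto simp: lca_aopen lcf_fopen)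

lemma lca_aclose: "lca j a \<Longrightarrow> lca (Suc j) (aclose j X a)"
  by (cases a) auto

lemma lcf_fclose: "lcf j A \<Longrightarrow> lcf (Suc j) (fclose j X A)"
  by (induction A arbitrary: j) (auto simp: lca_aclose)

lemma lct_tclose: "lct k j t \<Longrightarrow> lct (Suc k) j (tclose k x t)"
  by (induction t arbitrary: k j) auto

lemma lct_ttclose: "lct k j t \<Longrightarrow> lct k (Suc j) (ttclose j X t)"
  by (induction t arbitrary: k j) (auto simp: lca_aclose lcf_fclose)

lemma lct_psubst: "lct k j t \<Longrightarrow> \<forall>x\<in>tFV t. lct 0 0 (\<sigma> x) \<Longrightarrow> lct k j (psubst \<sigma> t)"
  by (induction t arbitrary: k j) (auto intro: lct_mono)

lemma wf_TApp_FA: "wf_trm (TApp t a) \<Longrightarrow> \<exists>Y. a = FA Y"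
  by (cases a) (auto simp: wf_trm_def)

lemma aclose_aopen: "X \<notin> afv a \<Longrightarrow> aclose j X (aopen j X a) = a"
  by (cases a) auto

lemma fclose_fopen: "X \<notin> ffv A \<Longrightarrow> fclose j X (fopen j X A) = A"
  by (induction A arbitrary: j) (auto simp: aclose_aopen)

lemma aopen_aclose: "lca j a \<Longrightarrow> aopen j X (aclose j X a) = a"
  by (cases a) auto

lemma fopen_fclose: "lcf j A \<Longrightarrow> fopen j X (fclose j X A) = A"
  by (induction A arbitrary: j) (auto simp: aopen_aclose)

lemma tclose_topen: "x \<notin> tFV t \<Longrightarrow> tclose k x (topen k (FV x) t) = t"
  by (induction t arbitrary: k) auto

lemma topen_tclose: "lct k j t \<Longrightarrow> topen k (FV x) (tclose k x t) = t"
  by (induction t arbitrary: k j) auto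

lemma ttclose_ttopen: "X \<notin> tatoms t \<Longrightarrow> ttclose j X (ttopen j X t) = t"
  by (induction t arbitrary: j) (auto simp: aclose_aopen fclose_fopen)

lemma ttopen_ttclose: "lct k j t \<Longrightarrow> ttopen j X (ttclose j X t) = t"
  by (induction t arbitrary: k j) (auto simp: aopen_aclose fopen_fclose)

lemma tclose_fresh: "x \<notin> tFV t \<Longrightarrow> tclose k x t = t"
  by (induction t arbitrary: k) auto

lemma aclose_fresh: "X \<notin> afv a \<Longrightarrow> aclose j X a = a"
  by (cases a) auto

lemma fclose_fresh: "X \<notin> ffv A \<Longrightarrow> fclose j X A = A"
  by (induction A arbitrary: j) (auto simp: aclose_fresh)

lemma ttclose_fresh: "X \<notin> tatoms t \<Longrightarrow> ttclose j X t = t"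
  by (induction t arbitrary: j) (auto simp: fclose_fresh aclose_fresh)

lemma psubst_topen_closed:
  "tFV t = {} \<Longrightarrow> psubst \<sigma> (topen k s t) = topen k (psubst \<sigma> s) t"
  by (induction t arbitrary: k) auto

lemma tFV_tclose [simp]: "tFV (tclose k x t) = tFV t - {x}"
  by (induction t arbitrary: k) auto

lemma tFV_topen: "tFV (topen k u t) \<subseteq> tFV t \<union> tFV u"
  by (induction t arbitrary: k) auto

lemma tFV_ttopen [simp]: "tFV (ttopen j Y t) = tFV t"
  by (induction t arbitrary: j) auto

lemma tFV_ttclose [simp]: "tFV (ttclose j Y t) = tFV t"
  by (induction t arbitrary: j) auto

lemma tFV_psubst: "tFV (psubst \<sigma> t) = (\<Union>x\<in>tFV t. tFV (\<sigma> x))"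
  by (induction t) auto

lemma afv_aclose [simp]: "afv (aclose j X a) = afv a - {X}"
  by (cases a) auto

lemma ffv_fclose [simp]: "ffv (fclose j X A) = ffv A - {X}"
  by (induction A arbitrary: j) auto

lemma tatoms_ttclose [simp]: "tatoms (ttclose j X t) = tatoms t - {X}"
  by (induction t arbitrary: j) auto

lemma afv_aopen: "afv (aopen j Y a) \<subseteq> afv a \<union> {Y}"
  by (cases a) auto

lemma ffv_fopen: "ffv (fopen j Y A) \<subseteq> ffv A \<union> {Y}"
  by (induction A arbitrary: j) (use afv_aopen in fastforce)+

lemma tatoms_ttopen: "tatoms (ttopen j Y t) \<subseteq> tatoms t \<union> {Y}"
  by (induction t arbitrary: j) (use ffv_fopen afv_aopen in fastforce)+

lemma tatoms_topen: "tatoms (topen k u t) \<subseteq> tatoms t \<union> tatoms u"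
  by (induction t arbitrary: k) auto

lemma tatoms_tclose [simp]: "tatoms (tclose k x t) = tatoms t"
  by (induction t arbitrary: k) auto

lemma finite_afv [simp]: "finite (afv a)"
  by (cases a) auto

lemma finite_ffv [simp]: "finite (ffv A)"
  by (induction A) auto

lemma finite_tFV [simp]: "finite (tFV t)"
  by (induction t) auto

lemma finite_tatoms [simp]: "finite (tatoms t)"
  by (induction t) auto

lemma size_topen_FV [simp]: "size (topen k (FV y) t) = size t"
  by (induction t arbitrary: k) auto

lemma size_ttopen [simp]: "size (ttopen j Y t) = size t"
  by (induction t arbitrary: j) auto

lemma obtain_fresh:
  fixes F :: "nat set"
  assumes "finite F"
  obtains x where "x \<notin> F"
  using assms ex_new_if_finite infinite_UNIV_nat by blast

lemma ashift_lca_id: "lca j a \<Longrightarrow> j \<le> c \<Longrightarrow> ashift c a = a"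
  by (cases a) auto

lemma fshift_lcf_id: "lcf j A \<Longrightarrow> j \<le> c \<Longrightarrow> fshift c A = A"
  by (induction A arbitrary: j c) (auto simp: ashift_lca_id)

lemma tshift_lct_id: "lct 0 j t \<Longrightarrow> tshift c t = t"
proof -
  have "lct k j t \<Longrightarrow> k \<le> c \<Longrightarrow> tshift c t = t" for k c
    by (induction t arbitrary: k j c) auto
  then show "lct 0 j t \<Longrightarrow> tshift c t = t" by blast
qed

lemma ttshift_lct_id: "lct k 0 t \<Longrightarrow> ttshift c t = t"
proof -
  have "lct k j t \<Longrightarrow> j \<le> c \<Longrightarrow> ttshift c t = t" for j c
    by (induction t arbitrary: k j c) (auto simp: fshift_lcf_id ashift_lca_id)
  then show "lct k 0 t \<Longrightarrow> ttshift c t = t" by blast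
qed

lemma lct_tshift: "lct k j t \<Longrightarrow> lct (Suc k) j (tshift c t)"
  by (induction t arbitrary: k j c) auto

lemma lca_ashift: "lca j a \<Longrightarrow> lca (Suc j) (ashift c a)"
  by (cases a) auto

lemma lcf_fshift: "lcf j A \<Longrightarrow> lcf (Suc j) (fshift c A)"
  by (induction A arbitrary: j c) (auto simp: lca_ashift)

lemma lct_ttshift: "lct k j t \<Longrightarrow> lct k (Suc j) (ttshift c t)"
  by (induction t arbitrary: k j c) (auto simp: lca_ashift lcf_fshift)

lemma lct_tshift_rev: "c \<le> k \<Longrightarrow> lct (Suc k) j (tshift c t) \<Longrightarrow> lct k j t"
proof (induction t arbitrary: c k j)
  case (Lam t)
  then show ?case using Lam.IH[of "Suc c" "Suc k" j] by simp
qed (auto split: if_splits)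

lemma lca_ashift_rev: "c \<le> j \<Longrightarrow> lca (Suc j) (ashift c a) \<Longrightarrow> lca j a"
  by (cases a) (auto split: if_splits)

lemma lcf_fshift_rev: "c \<le> j \<Longrightarrow> lcf (Suc j) (fshift c A) \<Longrightarrow> lcf j A"
proof (induction A arbitrary: c j)
  case (All A)
  then show ?case using All.IH[of "Suc c" "Suc j"] by simp
qed (auto intro: lca_ashift_rev)

lemma lct_ttshift_rev: "c \<le> j \<Longrightarrow> lct k (Suc j) (ttshift c t) \<Longrightarrow> lct k j t"
proof (induction t arbitrary: c k j)
  case (TLam t)
  then show ?case using TLam.IH[of "Suc c" "Suc j" k] by simp
qed (auto intro: lca_ashift_rev lcf_fshift_rev)

lemma topen_tshift: "c \<le> k \<Longrightarrow> lct 0 0 s \<Longrightarrow> topen (Suc k) s (tshift c t) = tshift c (topen k s t)"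
  by (induction t arbitrary: c k) (auto simp: tshift_lct_id)

lemma topen_ttshift: "lct 0 0 s \<Longrightarrow> topen k s (ttshift c t) = ttshift c (topen k s t)"
  by (induction t arbitrary: c k) (auto simp: ttshift_lct_id)

lemma ttopen_tshift: "ttopen j Y (tshift c t) = tshift c (ttopen j Y t)"
  by (induction t arbitrary: c j) auto

lemma aopen_ashift: "c \<le> j \<Longrightarrow> aopen (Suc j) Y (ashift c a) = ashift c (aopen j Y a)"
  by (cases a) auto

lemma fopen_fshift: "c \<le> j \<Longrightarrow> fopen (Suc j) Y (fshift c A) = fshift c (fopen j Y A)"
  by (induction A arbitrary: c j) (auto simp: aopen_ashift)

lemma ttopen_ttshift: "c \<le> j \<Longrightarrow> ttopen (Suc j) Y (ttshift c t) = ttshift c (ttopen j Y t)"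
  by (induction t arbitrary: c j) (auto simp: aopen_ashift fopen_fshift)

lemma tclose_tshift: "c \<le> k \<Longrightarrow> tclose (Suc k) x (tshift c t) = tshift c (tclose k x t)"
  by (induction t arbitrary: c k) auto

lemma tclose_ttshift: "tclose k x (ttshift c t) = ttshift c (tclose k x t)"
  by (induction t arbitrary: c k) auto

lemma ttclose_tshift: "ttclose j X (tshift c t) = tshift c (ttclose j X t)"
  by (induction t arbitrary: c j) auto

lemma aclose_ashift: "c \<le> j \<Longrightarrow> aclose (Suc j) X (ashift c a) = ashift c (aclose j X a)"
  by (cases a) auto

lemma fclose_fshift: "c \<le> j \<Longrightarrow> fclose (Suc j) X (fshift c A) = fshift c (fclose j X A)"
  by (induction A arbitrary: c j) (auto simp: aclose_ashift)

lemma ttclose_ttshift: "c \<le> j \<Longrightarrow> ttclose (Suc j) X (ttshift c t) = ttshift c (ttclose j X t)"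
  by (induction t arbitrary: c j) (auto simp: aclose_ashift fclose_fshift)

lemma tFV_tshift [simp]: "tFV (tshift c t) = tFV t"
  by (induction t arbitrary: c) auto

lemma tFV_ttshift [simp]: "tFV (ttshift c t) = tFV t"
  by (induction t arbitrary: c) auto

lemma afv_ashift [simp]: "afv (ashift c a) = afv a"
  by (cases a) auto

lemma ffv_fshift [simp]: "ffv (fshift c A) = ffv A"
  by (induction A arbitrary: c) auto

lemma tatoms_tshift [simp]: "tatoms (tshift c t) = tatoms t"
  by (induction t arbitrary: c) auto

lemma tatoms_ttshift [simp]: "tatoms (ttshift c t) = tatoms t"
  by (induction t arbitrary: c) auto

lemma size_tshift [simp]: "size (tshift c t) = size t"
  by (induction t arbitrary: c) auto

lemma size_ttshift [simp]: "size (ttshift c t) = size t"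
  by (induction t arbitrary: c) auto

lemma tshift_eq_Lam_iff: "tshift c t = Lam b \<longleftrightarrow> (\<exists>b'. t = Lam b' \<and> b = tshift (Suc c) b')"
  by (cases t) auto

lemma tshift_eq_TLam_iff: "tshift c t = TLam b \<longleftrightarrow> (\<exists>b'. t = TLam b' \<and> b = tshift c b')"
  by (cases t) auto

lemma ttshift_eq_Lam_iff: "ttshift c t = Lam b \<longleftrightarrow> (\<exists>b'. t = Lam b' \<and> b = ttshift c b')"
  by (cases t) auto

lemma ttshift_eq_TLam_iff: "ttshift c t = TLam b \<longleftrightarrow> (\<exists>b'. t = TLam b' \<and> b = ttshift (Suc c) b')"
  by (cases t) auto

lemma normal_tshift [simp]: "normal (tshift c t) = normal t"
  by (induction t arbitrary: c) (auto simp: tshift_eq_Lam_iff tshift_eq_TLam_iff)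

lemma normal_ttshift [simp]: "normal (ttshift c t) = normal t"
  by (induction t arbitrary: c) (auto simp: ttshift_eq_Lam_iff ttshift_eq_TLam_iff)

lemma tclose_eq_Lam_iff: "tclose k x t = Lam b \<longleftrightarrow> (\<exists>b'. t = Lam b' \<and> b = tclose (Suc k) x b')"
  by (cases t) auto

lemma tclose_eq_TLam_iff: "tclose k x t = TLam b \<longleftrightarrow> (\<exists>b'. t = TLam b' \<and> b = tclose k x b')"
  by (cases t) auto

lemma ttclose_eq_Lam_iff: "ttclose k X t = Lam b \<longleftrightarrow> (\<exists>b'. t = Lam b' \<and> b = ttclose k X b')"
  by (cases t) auto

lemma ttclose_eq_TLam_iff: "ttclose k X t = TLam b \<longleftrightarrow> (\<exists>b'. t = TLam b' \<and> b = ttclose (Suc k) X b')"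
  by (cases t) auto

lemma normal_tclose: "normal t \<Longrightarrow> normal (tclose k x t)"
  by (induction t arbitrary: k) (auto simp: tclose_eq_Lam_iff tclose_eq_TLam_iff)

lemma normal_ttclose: "normal t \<Longrightarrow> normal (ttclose k X t)"
  by (induction t arbitrary: k) (auto simp: ttclose_eq_Lam_iff ttclose_eq_TLam_iff)

lemma tswap_topen: "tswap a b (topen k u t) = topen k (tswap a b u) (tswap a b t)"
  by (induction t arbitrary: k) auto

lemma tswap_tclose: "tswap a b (tclose k x t) = tclose k (transpose a b x) (tswap a b t)"
  by (induction t arbitrary: k) (auto simp: inj_eq[OF inj_transpose])

lemma tswap_ttopen: "tswap a b (ttopen j Y t) = ttopen j Y (tswap a b t)"
  by (induction t arbitrary: j) auto

lemma tswap_ttclose: "tswap a b (ttclose j Y t) = ttclose j Y (tswap a b t)"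
  by (induction t arbitrary: j) auto

lemma lct_tswap [simp]: "lct k j (tswap a b t) = lct k j t"
  by (induction t arbitrary: k j) auto

lemma tswap_fresh: "a \<notin> tFV t \<Longrightarrow> b \<notin> tFV t \<Longrightarrow> tswap a b t = t"
  by (induction t) auto

lemma aswap_aopen: "aswap a b (aopen j Y c) = aopen j (transpose a b Y) (aswap a b c)"
  by (cases c) auto

lemma fswap_fopen: "fswap a b (fopen j Y A) = fopen j (transpose a b Y) (fswap a b A)"
  by (induction A arbitrary: j) (auto simp: aswap_aopen)

lemma aswap_aclose: "aswap a b (aclose j Y c) = aclose j (transpose a b Y) (aswap a b c)"
  by (cases c) (auto simp: inj_eq[OF inj_transpose])

lemma fswap_fclose: "fswap a b (fclose j Y A) = fclose j (transpose a b Y) (fswap a b A)"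
  by (induction A arbitrary: j) (auto simp: aswap_aclose)

lemma ttswap_ttopen: "ttswap a b (ttopen j Y t) = ttopen j (transpose a b Y) (ttswap a b t)"
  by (induction t arbitrary: j) (auto simp: aswap_aopen fswap_fopen)

lemma ttswap_ttclose: "ttswap a b (ttclose j Y t) = ttclose j (transpose a b Y) (ttswap a b t)"
  by (induction t arbitrary: j) (auto simp: aswap_aclose fswap_fclose)

lemma ttswap_topen: "ttswap a b (topen k u t) = topen k (ttswap a b u) (ttswap a b t)"
  by (induction t arbitrary: k) auto

lemma ttswap_tclose: "ttswap a b (tclose k x t) = tclose k x (ttswap a b t)"
  by (induction t arbitrary: k) auto

lemma lcf_fswap [simp]: "lcf j (fswap a b A) = lcf j A"
proof (induction A arbitrary: j)
  case (At c) then show ?case by (cases c) auto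
qed auto

lemma lct_ttswap [simp]: "lct k j (ttswap a b t) = lct k j t"
proof (induction t arbitrary: k j)
  case (TApp t c) then show ?case by (cases c) auto
qed auto

lemma ffv_fswap: "ffv (fswap a b A) = transpose a b ` ffv A"
proof (induction A)
  case (At c) then show ?case by (cases c) auto
qed (auto simp: image_Un)

lemma fswap_fresh: "a \<notin> ffv A \<Longrightarrow> b \<notin> ffv A \<Longrightarrow> fswap a b A = A"
proof (induction A)
  case (At c) then show ?case by (cases c) auto
qed auto

lemma ttswap_fresh: "a \<notin> tatoms t \<Longrightarrow> b \<notin> tatoms t \<Longrightarrow> ttswap a b t = t"
proof (induction t)
  case (TApp t c) then show ?case by (cases c) auto
qed (auto simp: fswap_fresh)

section \<open>Beta-reduction\<close>

lemma beta_wf: "beta t t' \<Longrightarrow> wf_trm t \<and> wf_trm t'"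
proof (induction rule: beta.induct)
  case (beta_lam t s)
  then show ?case by (auto simp: wf_trm_def intro: lct_topen)
next
  case (beta_tlam t Y)
  then show ?case by (auto simp: wf_trm_def intro: lct_ttopen)
next
  case (cong_lam t t' x)
  then show ?case by (auto simp: wf_trm_def intro: lct_tclose)
next
  case (cong_tlam t t' X)
  then show ?case by (auto simp: wf_trm_def intro: lct_ttclose)
qed (auto simp: wf_trm_def)

lemma beta_tFV: "beta t t' \<Longrightarrow> tFV t' \<subseteq> tFV t"
  by (induction rule: beta.induct) (use tFV_topen in auto)

lemma beta_tatoms: "beta t t' \<Longrightarrow> tatoms t' \<subseteq> tatoms t"
  by (induction rule: beta.induct) (use tatoms_ttopen tatoms_topen in fastforce)+

lemma proof_term_ttopen:
  "proof_term S t \<Longrightarrow> proof_term S (ttopen j Y t) \<and> con_atoms (ttopen j Y t) = con_atoms t"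
  by (induction t arbitrary: j) auto

lemma con_atoms_ttclose [simp]: "con_atoms (ttclose j X t) = con_atoms t - {X}"
  by (induction t arbitrary: j) auto

lemma proof_term_ttclose: "proof_term S (ttclose j X t) \<longleftrightarrow> proof_term S t \<and> X \<notin> con_atoms t"
proof (induction t arbitrary: j)
  case (Con A)
  show ?case
  proof (cases A)
    case (At a) then show ?thesis by (cases a) auto
  qed auto
qed auto

lemma proof_term_topen: "proof_term S t \<Longrightarrow> proof_term S u \<Longrightarrow> proof_term S (topen k u t)"
  by (induction t arbitrary: k) auto

lemma con_atoms_topen: "con_atoms (topen k u t) \<subseteq> con_atoms t \<union> con_atoms u"
  by (induction t arbitrary: k) auto

text \<open>Closing the atom \<open>X\<close> (rule \<open>cong_tlam\<close>) turns a base constant \<open>c\<^sup>X\<close> into one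
  outside the base, so preservation of proof-terms has to keep track of the atoms of constants.\<close>

lemma beta_proof_term: "beta t t' \<Longrightarrow> proof_term S t \<Longrightarrow> proof_term S t' \<and> con_atoms t' \<subseteq> con_atoms t"
proof (induction rule: beta.induct)
  case (beta_lam t s)
  then show ?case using proof_term_topen con_atoms_topen by fastforce
next
  case (beta_tlam t Y)
  then show ?case using proof_term_ttopen by auto
next
  case (cong_lam t t' x)
  have "proof_term S (tclose k x u) = proof_term S u" "con_atoms (tclose k x u) = con_atoms u" for k u
    by (induction u arbitrary: k) auto
  then show ?case using cong_lam by simp
next
  case (cong_tlam t t' X)
  then show ?case using proof_term_ttclose by auto
qed auto

lemma betas_wf: "betas t t' \<Longrightarrow> wf_trm t \<Longrightarrow> wf_trm t'"
  by (induction rule: rtranclp_induct) (auto dest: beta_wf)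

lemma betas_tFV: "betas t t' \<Longrightarrow> tFV t' \<subseteq> tFV t"
  by (induction rule: rtranclp_induct) (auto dest: beta_tFV)

lemma betas_proof_term: "betas t t' \<Longrightarrow> proof_term S t \<Longrightarrow> proof_term S t'"
  by (induction rule: rtranclp_induct) (auto dest: beta_proof_term)

lemma betas_appL: "betas t t' \<Longrightarrow> wf_trm s \<Longrightarrow> betas (App t s) (App t' s)"
  by (induction rule: rtranclp_induct) (auto intro: rtranclp.rtrancl_into_rtrancl beta.cong_appL)

lemma betas_appR: "betas s s' \<Longrightarrow> wf_trm t \<Longrightarrow> betas (App t s) (App t s')"
  by (induction rule: rtranclp_induct) (auto intro: rtranclp.rtrancl_into_rtrancl beta.cong_appR)

lemma betas_tapp: "betas t t' \<Longrightarrow> betas (TApp t (FA Y)) (TApp t' (FA Y))"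
  by (induction rule: rtranclp_induct) (auto intro: rtranclp.rtrancl_into_rtrancl beta.cong_tapp)

lemma betas_lam: "betas t t' \<Longrightarrow> betas (Lam (tclose 0 x t)) (Lam (tclose 0 x t'))"
  by (induction rule: rtranclp_induct) (auto intro: rtranclp.rtrancl_into_rtrancl beta.cong_lam)

lemma betas_tlam: "betas t t' \<Longrightarrow> betas (TLam (ttclose 0 X t)) (TLam (ttclose 0 X t'))"
  by (induction rule: rtranclp_induct) (auto intro: rtranclp.rtrancl_into_rtrancl beta.cong_tlam)

lemma beta_tswap: "beta t t' \<Longrightarrow> beta (tswap a b t) (tswap a b t')"
proof (induction rule: beta.induct)
  case (beta_lam t s)
  then show ?case using beta.beta_lam[of "tswap a b t" "tswap a b s"]
    by (auto simp: wf_trm_def tswap_topen)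
next
  case (beta_tlam t Y)
  then show ?case using beta.beta_tlam[of "tswap a b t" Y]
    by (auto simp: wf_trm_def tswap_ttopen)
qed (auto simp: wf_trm_def tswap_tclose tswap_ttclose intro: beta.intros)

lemma beta_ttswap: "beta t t' \<Longrightarrow> beta (ttswap a b t) (ttswap a b t')"
proof (induction rule: beta.induct)
  case (beta_lam t s)
  then show ?case using beta.beta_lam[of "ttswap a b t" "ttswap a b s"]
    by (auto simp: wf_trm_def ttswap_topen)
next
  case (beta_tlam t Y)
  then show ?case using beta.beta_tlam[of "ttswap a b t" "transpose a b Y"]
    by (auto simp: wf_trm_def ttswap_ttopen)
qed (auto simp: wf_trm_def ttswap_tclose ttswap_ttclose intro: beta.intros)

lemma not_beta_FV [simp]: "\<not> beta (FV x) w"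
  and not_beta_BV [simp]: "\<not> beta (BV i) w"
  and not_beta_Con [simp]: "\<not> beta (Con A) w"
  by (auto elim: beta.cases)

lemma beta_AppE:
  assumes "beta (App t s) w"
  obtains b where "t = Lam b" "w = topen 0 s b"
  | t' where "beta t t'" "w = App t' s"
  | s' where "beta s s'" "w = App t s'"
  using assms by (cases rule: beta.cases) auto

lemma beta_TAppE:
  assumes "beta (TApp t a) w"
  obtains b Y where "t = TLam b" "a = FA Y" "w = ttopen 0 Y b"
  | t' where "beta t t'" "w = TApp t' a"
  using assms by (cases rule: beta.cases) auto

text \<open>A reduct under one name of the bound variable is renamed to any fresh name by a swap.\<close>

lemma beta_LamE:
  assumes "beta (Lam b) w"
  obtains b' L where "w = Lam b'" "finite L"
    "\<And>y. y \<notin> L \<Longrightarrow> beta (topen 0 (FV y) b) (topen 0 (FV y) b')"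
proof -
  from assms obtain x t t' where xt: "b = tclose 0 x t" "w = Lam (tclose 0 x t')" "beta t t'"
    by (cases rule: beta.cases) auto
  define b' where "b' = tclose 0 x t'"
  have lt: "lct 0 0 t" "lct 0 0 t'" using beta_wf[OF xt(3)] by (auto simp: wf_trm_def)
  have "beta (topen 0 (FV y) b) (topen 0 (FV y) b')" if "y \<notin> tFV b \<union> tFV b'" for y
  proof -
    have "t = topen 0 (FV x) b" "t' = topen 0 (FV x) b'" "x \<notin> tFV b" "x \<notin> tFV b'"
      using topen_tclose[OF lt(1)] topen_tclose[OF lt(2)] by (simp_all add: xt(1) b'_def)
    then have "tswap x y t = topen 0 (FV y) b" "tswap x y t' = topen 0 (FV y) b'"
      using that by (simp_all add: tswap_topen tswap_fresh)
    then show ?thesis using beta_tswap[OF xt(3)] by metis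
  qed
  moreover have "w = Lam b'" using xt(2) b'_def by simp
  ultimately show thesis using that[of b' "tFV b \<union> tFV b'"] by simp
qed

lemma beta_TLamE:
  assumes "beta (TLam b) w"
  obtains b' L where "w = TLam b'" "finite L"
    "\<And>Y. Y \<notin> L \<Longrightarrow> beta (ttopen 0 Y b) (ttopen 0 Y b')"
proof -
  from assms obtain X t t' where Xt: "b = ttclose 0 X t" "w = TLam (ttclose 0 X t')" "beta t t'"
    by (cases rule: beta.cases) auto
  define b' where "b' = ttclose 0 X t'"
  have lt: "lct 0 0 t" "lct 0 0 t'" using beta_wf[OF Xt(3)] by (auto simp: wf_trm_def)
  have "beta (ttopen 0 Y b) (ttopen 0 Y b')" if "Y \<notin> tatoms b \<union> tatoms b'" for Y
  proof -
    have "t = ttopen 0 X b" "t' = ttopen 0 X b'" "X \<notin> tatoms b" "X \<notin> tatoms b'"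
      using ttopen_ttclose[OF lt(1)] ttopen_ttclose[OF lt(2)] by (simp_all add: Xt(1) b'_def)
    then have "ttswap X Y t = ttopen 0 Y b" "ttswap X Y t' = ttopen 0 Y b'"
      using that by (simp_all add: ttswap_ttopen ttswap_fresh)
    then show ?thesis using beta_ttswap[OF Xt(3)] by metis
  qed
  moreover have "w = TLam b'" using Xt(2) b'_def by simp
  ultimately show thesis using that[of b' "tatoms b \<union> tatoms b'"] by simp
qed

section \<open>Derivability\<close>

lemma wf_ctx_empty [simp]: "wf_ctx Map.empty"
  by (simp add: wf_ctx_def)

lemma wf_ctx_upd: "wf_ctx \<Gamma> \<Longrightarrow> wf_form A \<Longrightarrow> wf_ctx (\<Gamma>(x \<mapsto> A))"
  unfolding wf_ctx_def by (auto simp: ran_def)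

lemma wf_ctx_upd_rev: "wf_ctx (\<Gamma>(x \<mapsto> A)) \<Longrightarrow> x \<notin> dom \<Gamma> \<Longrightarrow> wf_ctx \<Gamma>"
  unfolding wf_ctx_def ran_def by (auto split: if_splits) (metis option.distinct(1))

lemma ran_map_add_subset: "ran (\<Gamma> ++ \<Delta>) \<subseteq> ran \<Gamma> \<union> ran \<Delta>"
  unfolding ran_def by (auto simp: map_add_Some_iff)

lemma wf_ctx_map_add: "wf_ctx \<Gamma> \<Longrightarrow> wf_ctx \<Delta> \<Longrightarrow> wf_ctx (\<Gamma> ++ \<Delta>)"
  unfolding wf_ctx_def using ran_map_add_subset[of \<Gamma> \<Delta>] by auto

lemma wf_ctx_wf_form: "wf_ctx \<Gamma> \<Longrightarrow> \<Gamma> x = Some A \<Longrightarrow> wf_form A"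
  by (auto simp: wf_ctx_def intro: ranI)

lemma finite_PFV: "wf_ctx \<Gamma> \<Longrightarrow> finite (PFV \<Gamma>)"
  by (auto simp: wf_ctx_def PFV_def intro: finite_ran)

lemma PFV_map_add: "PFV (\<Gamma> ++ \<Delta>) \<subseteq> PFV \<Gamma> \<union> PFV \<Delta>"
  unfolding PFV_def using ran_map_add_subset[of \<Gamma> \<Delta>] by auto

lemma derivable_wf: "derivable \<Gamma> t A \<Longrightarrow> wf_ctx \<Gamma> \<and> wf_trm t \<and> wf_form A"
proof (induction rule: derivable.induct)
  case (ax \<Gamma> x A)
  then show ?case by (auto simp: wf_trm_def dest: wf_ctx_wf_form)
next
  case (impI x \<Gamma> A t B)
  then have "wf_ctx \<Gamma>" using wf_ctx_upd_rev by blast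
  then show ?case using impI lct_tclose[of 0 0 t x] by (auto simp: wf_trm_def wf_form_def)
next
  case (allI \<Gamma> t A X)
  then show ?case using lct_ttclose[of 0 0 t X] lcf_fclose[of 0 A X]
    by (auto simp: wf_trm_def wf_form_def)
next
  case (allE \<Gamma> t A Y)
  then show ?case using lcf_fopen[of 0 A Y] by (auto simp: wf_trm_def wf_form_def)
qed (auto simp: wf_trm_def wf_form_def)

lemma derivable_tswap: "derivable \<Gamma> t A \<Longrightarrow> derivable (\<Gamma> \<circ> transpose a b) (tswap a b t) A"
proof (induction rule: derivable.induct)
  have dom: "dom (\<Gamma> \<circ> transpose a b) = transpose a b ` dom \<Gamma>" for \<Gamma> :: ctx
    by (auto simp: in_transpose_image_iff)
  have ran: "ran (\<Gamma> \<circ> transpose a b) = ran \<Gamma>" for \<Gamma> :: ctx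
    unfolding ran_def by auto (metis transpose_involutory)
  have wf: "wf_ctx \<Gamma> \<Longrightarrow> wf_ctx (\<Gamma> \<circ> transpose a b)" for \<Gamma>
    by (simp add: wf_ctx_def dom ran)
  {
    case (ax \<Gamma> x A)
    have "(\<Gamma> \<circ> transpose a b) (transpose a b x) = Some A" using ax(2) by simp
    from derivable.ax[OF wf[OF ax(1)] this] show ?case by simp
  next
    case (const \<Gamma> A)
    from derivable.const[OF wf[OF const(1)] const(2)] show ?case by (simp only: tswap.simps)
  next
    case (impI x \<Gamma> A t B)
    have "\<Gamma>(x \<mapsto> A) \<circ> transpose a b = (\<Gamma> \<circ> transpose a b)(transpose a b x \<mapsto> A)"
      by (auto simp: fun_eq_iff inj_eq[OF inj_transpose])
    with impI.IH have "derivable ((\<Gamma> \<circ> transpose a b)(transpose a b x \<mapsto> A)) (tswap a b t) B"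
      by (simp only:)
    moreover have "transpose a b x \<notin> dom (\<Gamma> \<circ> transpose a b)"
      using impI(1) by (simp add: dom inj_image_mem_iff[OF inj_transpose])
    ultimately show ?case using derivable.impI[OF _ impI(2)] by (simp only: tswap.simps tswap_tclose)
  next
    case (impE \<Gamma> t A B s)
    then show ?case by (auto intro: derivable.impE)
  next
    case (allI \<Gamma> t A X)
    have "X \<notin> PFV (\<Gamma> \<circ> transpose a b)" using allI.hyps(2) by (simp add: PFV_def ran)
    from derivable.allI[OF allI.IH this] show ?case by (simp only: tswap.simps tswap_ttclose)
  next
    case (allE \<Gamma> t A Y)
    then show ?case by (auto intro: derivable.allE)
  }
qed

definition cswap :: "nat \<Rightarrow> nat \<Rightarrow> ctx \<Rightarrow> ctx" where
  "cswap a b \<Gamma> = map_option (fswap a b) \<circ> \<Gamma>"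

lemma derivable_ttswap:
  "derivable \<Gamma> t A \<Longrightarrow> derivable (cswap a b \<Gamma>) (ttswap a b t) (fswap a b A)"
proof (induction rule: derivable.induct)
  have ran: "ran (cswap a b \<Gamma>) = fswap a b ` ran \<Gamma>" for \<Gamma>
    by (auto simp: cswap_def ran_def)
  have "dom (cswap a b \<Gamma>) = dom \<Gamma>" for \<Gamma>
    by (auto simp: cswap_def)
  then have wf: "wf_ctx \<Gamma> \<Longrightarrow> wf_ctx (cswap a b \<Gamma>)" for \<Gamma>
    by (auto simp: wf_ctx_def ran wf_form_def)
  {
    case (ax \<Gamma> x A)
    have "cswap a b \<Gamma> x = Some (fswap a b A)" using ax(2) by (simp add: cswap_def)
    from derivable.ax[OF wf[OF ax(1)] this] show ?case by simp
  next
    case (const \<Gamma> A)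
    then show ?case by (auto intro!: derivable.const wf simp: wf_form_def)
  next
    case (impI x \<Gamma> A t B)
    have "cswap a b (\<Gamma>(x \<mapsto> A)) = (cswap a b \<Gamma>)(x \<mapsto> fswap a b A)"
      by (auto simp: cswap_def)
    with impI.IH have "derivable ((cswap a b \<Gamma>)(x \<mapsto> fswap a b A)) (ttswap a b t) (fswap a b B)"
      by (simp only:)
    moreover have "x \<notin> dom (cswap a b \<Gamma>)" "wf_form (fswap a b A)"
      using impI(1,2) by (auto simp: cswap_def wf_form_def)
    ultimately show ?case using derivable.impI[of x "cswap a b \<Gamma>"] by (simp add: ttswap_tclose)
  next
    case (impE \<Gamma> t A B s)
    then show ?case by (auto intro: derivable.impE)
  next
    case (allI \<Gamma> t A X)
    have "transpose a b X \<notin> PFV (cswap a b \<Gamma>)"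
      using allI.hyps(2) by (auto simp: PFV_def ran ffv_fswap inj_eq[OF inj_transpose])
    from derivable.allI[OF allI.IH this] show ?case by (simp add: ttswap_ttclose fswap_fclose)
  next
    case (allE \<Gamma> t A Y)
    then show ?case using derivable.allE[of "cswap a b \<Gamma>" _ "fswap a b A" "transpose a b Y"]
      by (auto simp: fswap_fopen)
  }
qed

lemma derivable_strengthen:
  "derivable \<Gamma> t A \<Longrightarrow> z \<notin> tFV t \<Longrightarrow> derivable (\<Gamma>(z := None)) t A"
proof (induction rule: derivable.induct)
  have wf: "wf_ctx \<Gamma> \<Longrightarrow> wf_ctx (\<Gamma>(z := None))" for \<Gamma>
    unfolding wf_ctx_def ran_def by auto
  {
    case (ax \<Gamma> x A)
    have "(\<Gamma>(z := None)) x = Some A" using ax by auto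
    from derivable.ax[OF wf[OF ax(1)] this] show ?case .
  next
    case (const \<Gamma> A)
    from derivable.const[OF wf[OF const(1)] const(2)] show ?case .
  next
    case (impI x \<Gamma> A t B)
    show ?case
    proof (cases "z = x")
      case True
      then have "\<Gamma>(z := None) = \<Gamma>" using impI(1) by auto
      then show ?thesis using derivable.impI[OF impI(1-3)] by simp
    next
      case False
      then have "(\<Gamma>(x \<mapsto> A))(z := None) = (\<Gamma>(z := None))(x \<mapsto> A)" by auto
      moreover have "z \<notin> tFV t" using impI(5) False by simp
      ultimately have "derivable ((\<Gamma>(z := None))(x \<mapsto> A)) t B" using impI(4) by metis
      moreover have "x \<notin> dom (\<Gamma>(z := None))" using impI(1) by simp
      ultimately show ?thesis using derivable.impI[OF _ impI(2)] by blast
    qed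
  next
    case (impE \<Gamma> t A B s)
    then show ?case by (auto intro: derivable.impE)
  next
    case (allI \<Gamma> t A X)
    have "PFV (\<Gamma>(z := None)) \<subseteq> PFV \<Gamma>" unfolding PFV_def ran_def by auto
    then have "X \<notin> PFV (\<Gamma>(z := None))" using allI.hyps(2) by blast
    moreover have "z \<notin> tFV t" using allI.prems by simp
    ultimately show ?case using derivable.allI allI.IH by blast
  next
    case (allE \<Gamma> t A Y)
    then show ?case by (auto intro: derivable.allE)
  }
qed

inductive_cases derivable_FVE: "derivable \<Gamma> (FV x) A"
inductive_cases derivable_BVE: "derivable \<Gamma> (BV i) A"
inductive_cases derivable_ConE: "derivable \<Gamma> (Con F) A"
inductive_cases derivable_AppE: "derivable \<Gamma> (App t s) B"
inductive_cases derivable_TAppE: "derivable \<Gamma> (TApp t a) B"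

lemma derivable_LamE:
  assumes "derivable \<Gamma> (Lam b) C"
  obtains A B L where "C = Imp A B" "wf_form A" "finite L"
    "\<And>z. z \<notin> L \<Longrightarrow> derivable (\<Gamma>(z \<mapsto> A)) (topen 0 (FV z) b) B"
  using assms
proof (cases rule: derivable.cases)
  case (impI x A t B)
  have lt: "lct 0 0 t" using derivable_wf[OF impI(5)] by (auto simp: wf_trm_def)
  have tb: "t = topen 0 (FV x) b" "x \<notin> tFV b" using impI(1) topen_tclose[OF lt] by simp_all
  have "derivable (\<Gamma>(z \<mapsto> A)) (topen 0 (FV z) b) B" if z: "z \<notin> dom \<Gamma> \<union> tFV b" for z
  proof -
    have "(\<Gamma>(x \<mapsto> A)) \<circ> transpose x z = \<Gamma>(z \<mapsto> A)"
      using z impI(3) by (auto simp: transpose_def fun_eq_iff)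
    moreover have "tswap x z t = topen 0 (FV z) b"
      using z tb by (simp add: tswap_topen tswap_fresh)
    ultimately show ?thesis using derivable_tswap[OF impI(5), of x z] by simp
  qed
  moreover have "finite (dom \<Gamma> \<union> tFV b)"
    using derivable_wf[OF assms] by (auto simp: wf_ctx_def)
  ultimately show thesis using that impI(2,4) by blast
qed

lemma derivable_TLamE:
  assumes "derivable \<Gamma> (TLam b) C"
  obtains A L where "C = All A" "finite L"
    "\<And>X. X \<notin> L \<Longrightarrow> derivable \<Gamma> (ttopen 0 X b) (fopen 0 X A)"
  using assms
proof (cases rule: derivable.cases)
  case (allI t A' Y)
  let ?A = "fclose 0 Y A'"
  have wf: "wf_ctx \<Gamma>" "wf_trm t" "wf_form A'" using derivable_wf[OF allI(3)] by auto
  have tb: "t = ttopen 0 Y b" "Y \<notin> tatoms b"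
    using allI(1) ttopen_ttclose[of 0 0 t Y] wf(2) by (simp_all add: wf_trm_def)
  have A': "A' = fopen 0 Y ?A" "Y \<notin> ffv ?A"
    using fopen_fclose[of 0 A' Y] wf(3) by (simp_all add: wf_form_def)
  have "derivable \<Gamma> (ttopen 0 X b) (fopen 0 X ?A)" if X: "X \<notin> PFV \<Gamma> \<union> tatoms b \<union> ffv ?A" for X
  proof -
    have "cswap Y X \<Gamma> = \<Gamma>"
    proof
      fix z show "cswap Y X \<Gamma> z = \<Gamma> z"
      proof (cases "\<Gamma> z")
        case (Some C)
        then have "Y \<notin> ffv C" "X \<notin> ffv C" using allI(4) X by (auto simp: PFV_def intro: ranI)
        then show ?thesis using Some by (simp add: cswap_def fswap_fresh)
      qed (simp add: cswap_def)
    qed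
    moreover have "ttswap Y X t = ttopen 0 X b"
      using X tb by (simp add: ttswap_ttopen ttswap_fresh)
    moreover have "fswap Y X A' = fopen 0 X ?A"
    proof -
      have "fswap Y X ?A = ?A" using X A'(2) by (simp add: fswap_fresh)
      then show ?thesis by (subst A'(1)) (simp add: fswap_fopen)
    qed
    ultimately show ?thesis using derivable_ttswap[OF allI(3), of Y X] by simp
  qed
  moreover have "finite (PFV \<Gamma> \<union> tatoms b \<union> ffv ?A)" using finite_PFV[OF wf(1)] by simp
  ultimately show thesis using that[of ?A "PFV \<Gamma> \<union> tatoms b \<union> ffv ?A"] allI(2) by blast
qed

section \<open>Eta-expansion of neutral terms\<close>

inductive neutral :: "trm \<Rightarrow> bool" where
  "neutral (FV x)"
| "neutral (Con A)"
| "neutral n \<Longrightarrow> neutral (App n s)"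
| "neutral n \<Longrightarrow> neutral (TApp n a)"

lemma neutral_simps [simp]:
  "neutral (FV x)" "neutral (Con A)" "neutral (App n s) \<longleftrightarrow> neutral n"
  "neutral (TApp n a) \<longleftrightarrow> neutral n"
  "\<not> neutral (BV i)" "\<not> neutral (Lam b)" "\<not> neutral (TLam b)"
  by (auto intro: neutral.intros elim: neutral.cases)

lemma derivable_neutral_ffv: "derivable \<Gamma> n A \<Longrightarrow> neutral n \<Longrightarrow> ffv A \<subseteq> tatoms n \<union> PFV \<Gamma>"
proof (induction rule: derivable.induct)
  case (ax \<Gamma> x A)
  then show ?case by (auto simp: PFV_def intro: ranI)
next
  case (allE \<Gamma> t A Y)
  then show ?case using ffv_fopen[of 0 Y A] by auto
qed auto

fun eta :: "form \<Rightarrow> trm \<Rightarrow> trm" where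
  "eta (At a) n = n"
| "eta (Imp B C) n = Lam (eta C (App (tshift 0 n) (BV 0)))"
| "eta (All A) n = TLam (eta A (TApp (ttshift 0 n) (BA 0)))"

lemma eta_fopen [simp]: "eta (fopen j Y C) n = eta C n"
  by (induction C arbitrary: j n) auto

lemma eta_topen: "lct 0 0 s \<Longrightarrow> topen k s (eta C n) = eta C (topen k s n)"
  by (induction C arbitrary: k n) (auto simp: topen_tshift topen_ttshift)

lemma eta_ttopen: "ttopen j Y (eta C n) = eta C (ttopen j Y n)"
  by (induction C arbitrary: j n) (auto simp: ttopen_tshift ttopen_ttshift)

lemma eta_tclose: "tclose k x (eta C n) = eta C (tclose k x n)"
  by (induction C arbitrary: k n) (auto simp: tclose_tshift tclose_ttshift)

lemma eta_ttclose: "ttclose j X (eta C n) = eta C (ttclose j X n)"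
  by (induction C arbitrary: j n) (auto simp: ttclose_tshift ttclose_ttshift)

lemma eta_Imp_topen: "lct 0 0 s \<Longrightarrow> lct 0 0 n \<Longrightarrow>
    topen 0 s (eta C (App (tshift 0 n) (BV 0))) = eta C (App n s)"
  by (simp add: eta_topen tshift_lct_id topen_lct_id)

lemma eta_All_ttopen: "lct 0 0 n \<Longrightarrow>
    ttopen 0 Y (eta C (TApp (ttshift 0 n) (BA 0))) = eta C (TApp n (FA Y))"
  by (simp add: eta_ttopen ttshift_lct_id ttopen_lct_id)

lemma lct_eta: "lct k j n \<Longrightarrow> lct k j (eta C n)"
  by (induction C arbitrary: k j n) (auto simp: lct_tshift lct_ttshift)

lemma lct_eta_rev: "lct k j (eta C n) \<Longrightarrow> lct k j n"
proof (induction C arbitrary: k j n)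
  case (Imp B C)
  have "lct (Suc k) j (eta C (App (tshift 0 n) (BV 0)))" using Imp.prems by simp
  then have "lct (Suc k) j (App (tshift 0 n) (BV 0))" by (rule Imp.IH(2))
  then show ?case using lct_tshift_rev[of 0 k j n] by simp
next
  case (All A)
  have "lct k (Suc j) (eta A (TApp (ttshift 0 n) (BA 0)))" using All.prems by simp
  then have "lct k (Suc j) (TApp (ttshift 0 n) (BA 0))" by (rule All.IH)
  then show ?case using lct_ttshift_rev[of 0 j k n] by simp
qed simp

lemma tFV_eta [simp]: "tFV (eta C n) = tFV n"
  by (induction C arbitrary: n) auto

lemma size_eta: "size n \<le> size (eta C n)"
proof (induction C arbitrary: n)
  case (Imp B C)
  then show ?case using Imp.IH(2)[of "App (tshift 0 n) (BV 0)"] by simp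
next
  case (All A)
  then show ?case using All.IH[of "TApp (ttshift 0 n) (BA 0)"] by simp
qed simp

lemma size_lt_eta: "\<not> (\<exists>a. C = At a) \<Longrightarrow> size n < size (eta C n)"
proof (cases C)
  case (Imp B C')
  then show ?thesis using size_eta[of "App (tshift 0 n) (BV 0)" C'] by simp
next
  case (All A)
  then show ?thesis using size_eta[of "TApp (ttshift 0 n) (BA 0)" A] by simp
qed simp

lemma normal_eta_imp_normal: "normal (eta C n) \<Longrightarrow> normal n"
proof (induction C arbitrary: n)
  case (Imp B C)
  have "normal (eta C (App (tshift 0 n) (BV 0)))" using Imp.prems by simp
  then have "normal (App (tshift 0 n) (BV 0))" by (rule Imp.IH(2))
  then show ?case by simp
next
  case (All A)
  have "normal (eta A (TApp (ttshift 0 n) (BA 0)))" using All.prems by simp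
  then have "normal (TApp (ttshift 0 n) (BA 0))" by (rule All.IH)
  then show ?case by simp
qed simp

lemma eta_eq_LamD:
  "eta C n = Lam b \<Longrightarrow> neutral n \<Longrightarrow> \<exists>B C'. C = Imp B C' \<and> b = eta C' (App (tshift 0 n) (BV 0))"
  by (cases C) auto

lemma eta_eq_TLamD:
  "eta C n = TLam b \<Longrightarrow> neutral n \<Longrightarrow> \<exists>A. C = All A \<and> b = eta A (TApp (ttshift 0 n) (BA 0))"
  by (cases C) auto

lemma beta_eta_inv:
  "neutral n \<Longrightarrow> beta (eta C n) w \<Longrightarrow> \<exists>n'. w = eta C n' \<and> beta n n'"
proof (induction C arbitrary: n w)
  case (At a)
  then show ?case by simp
next
  case (Imp B C)
  have ln: "lct 0 0 n"
    using beta_wf[OF Imp.prems(2)] lct_eta_rev[of 0 0 "Imp B C" n] by (simp add: wf_trm_def)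
  let ?b = "eta C (App (tshift 0 n) (BV 0))"
  obtain b' L where b': "w = Lam b'" "finite L"
    "\<And>y. y \<notin> L \<Longrightarrow> beta (topen 0 (FV y) ?b) (topen 0 (FV y) b')"
    using Imp.prems(2) by (auto elim: beta_LamE)
  have "finite (L \<union> tFV n \<union> tFV b')" using b'(2) by simp
  then obtain x where x: "x \<notin> L \<union> tFV n \<union> tFV b'" by (rule obtain_fresh)
  then have "beta (eta C (App n (FV x))) (topen 0 (FV x) b')"
    using b'(3)[of x] eta_Imp_topen[of "FV x" n C] ln by simp
  then obtain n'' where n'': "topen 0 (FV x) b' = eta C n''" "beta (App n (FV x)) n''"
    using Imp.IH(2)[of "App n (FV x)"] Imp.prems by auto
  then obtain n1 where n1: "n'' = App n1 (FV x)" "beta n n1"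
    using Imp.prems(1) by (elim beta_AppE) auto
  have "x \<notin> tFV n1" using x beta_tFV[OF n1(2)] by auto
  moreover have "lct 0 0 n1" using beta_wf[OF n1(2)] by (simp add: wf_trm_def)
  ultimately have "b' = eta C (App (tshift 0 n1) (BV 0))"
    using tclose_topen[of x b' 0] x n'' n1(1)
    by (simp add: eta_tclose tclose_fresh tshift_lct_id)
  then show ?case using b'(1) n1(2) by auto
next
  case (All A)
  have ln: "lct 0 0 n"
    using beta_wf[OF All.prems(2)] lct_eta_rev[of 0 0 "All A" n] by (simp add: wf_trm_def)
  let ?b = "eta A (TApp (ttshift 0 n) (BA 0))"
  obtain b' L where b': "w = TLam b'" "finite L"
    "\<And>Y. Y \<notin> L \<Longrightarrow> beta (ttopen 0 Y ?b) (ttopen 0 Y b')"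
    using All.prems(2) by (auto elim: beta_TLamE)
  have "finite (L \<union> tatoms n \<union> tatoms b')" using b'(2) by simp
  then obtain X where X: "X \<notin> L \<union> tatoms n \<union> tatoms b'" by (rule obtain_fresh)
  then have "beta (eta A (TApp n (FA X))) (ttopen 0 X b')"
    using b'(3)[of X] eta_All_ttopen[of n X A] ln by simp
  then obtain n'' where n'': "ttopen 0 X b' = eta A n''" "beta (TApp n (FA X)) n''"
    using All.IH[of "TApp n (FA X)"] All.prems by auto
  then obtain n1 where n1: "n'' = TApp n1 (FA X)" "beta n n1"
    using All.prems(1) by (elim beta_TAppE) auto
  have "X \<notin> tatoms n1" using X beta_tatoms[OF n1(2)] by auto
  moreover have "lct 0 0 n1" using beta_wf[OF n1(2)] by (simp add: wf_trm_def)
  ultimately have "b' = eta A (TApp (ttshift 0 n1) (BA 0))"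
    using ttclose_ttopen[of X b' 0] X n'' n1(1)
    by (simp add: eta_ttclose ttclose_fresh ttshift_lct_id)
  then show ?case using b'(1) n1(2) by auto
qed

lemma derivable_eta_inv:
  "neutral n \<Longrightarrow> derivable \<Gamma> (eta C n) A \<Longrightarrow> derivable \<Gamma> n A"
proof (induction C arbitrary: n A \<Gamma>)
  case (At a)
  then show ?case by simp
next
  case (Imp B C)
  have wf: "wf_ctx \<Gamma>" and ln: "lct 0 0 n"
    using derivable_wf[OF Imp.prems(2)] lct_eta_rev[of 0 0 "Imp B C" n] by (auto simp: wf_trm_def)
  obtain A1 A2 L where A: "A = Imp A1 A2" "finite L"
    "\<And>z. z \<notin> L \<Longrightarrow> derivable (\<Gamma>(z \<mapsto> A1)) (topen 0 (FV z) (eta C (App (tshift 0 n) (BV 0)))) A2"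
    using Imp.prems(2) by (auto elim: derivable_LamE)
  have "finite (L \<union> tFV n \<union> dom \<Gamma>)" using A(2) wf by (simp add: wf_ctx_def)
  then obtain z where z: "z \<notin> L \<union> tFV n \<union> dom \<Gamma>" by (rule obtain_fresh)
  then have "derivable (\<Gamma>(z \<mapsto> A1)) (eta C (App n (FV z))) A2"
    using A(3)[of z] eta_Imp_topen[of "FV z" n C] ln by simp
  then have "derivable (\<Gamma>(z \<mapsto> A1)) (App n (FV z)) A2"
    using Imp.IH(2)[of "App n (FV z)"] Imp.prems by simp
  then have "derivable (\<Gamma>(z \<mapsto> A1)) n (Imp A1 A2)"
    by (elim derivable_AppE derivable_FVE) auto
  then have "derivable ((\<Gamma>(z \<mapsto> A1))(z := None)) n (Imp A1 A2)"
    using derivable_strengthen z by blast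
  moreover have "(\<Gamma>(z \<mapsto> A1))(z := None) = \<Gamma>" using z by auto
  ultimately show ?case using A(1) by simp
next
  case (All A0)
  have wf: "wf_ctx \<Gamma>" and ln: "lct 0 0 n"
    using derivable_wf[OF All.prems(2)] lct_eta_rev[of 0 0 "All A0" n] by (auto simp: wf_trm_def)
  obtain F L where F: "A = All F" "finite L"
    "\<And>X. X \<notin> L \<Longrightarrow> derivable \<Gamma> (ttopen 0 X (eta A0 (TApp (ttshift 0 n) (BA 0)))) (fopen 0 X F)"
    using All.prems(2) by (auto elim: derivable_TLamE)
  have "finite (L \<union> tatoms n \<union> PFV \<Gamma> \<union> ffv F)" using F(2) finite_PFV[OF wf] by simp
  then obtain X where X: "X \<notin> L \<union> tatoms n \<union> PFV \<Gamma> \<union> ffv F" by (rule obtain_fresh)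
  then have "derivable \<Gamma> (eta A0 (TApp n (FA X))) (fopen 0 X F)"
    using F(3)[of X] eta_All_ttopen[of n X A0] ln by simp
  then have "derivable \<Gamma> (TApp n (FA X)) (fopen 0 X F)"
    using All.IH[of "TApp n (FA X)"] All.prems by simp
  then obtain F' where F': "derivable \<Gamma> n (All F')" "fopen 0 X F = fopen 0 X F'"
    by (elim derivable_TAppE) auto
  have "X \<notin> ffv F'" using derivable_neutral_ffv[OF F'(1) All.prems(1)] X by auto
  then have "F' = F" using F'(2) X fclose_fopen[of X F' 0] fclose_fopen[of X F 0] by simp
  then show ?case using F'(1) F(1) by simp
qed

section \<open>Markers\<close>

text \<open>The marker of \<open>x : A\<close> stands for the variable in closed terms; the atom \<open>x\<close> keeps the
  markers of distinct variables apart. Its constants lie outside every atomic base, but they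
  never reach the reducts of the given proof-term.\<close>

definition marker :: "nat \<Rightarrow> form \<Rightarrow> trm" where
  "marker x A = App (Con (Imp (All (At (FA x))) A)) (Con (All (At (FA x))))"

lemma lct_marker: "lcf 0 A \<Longrightarrow> lct k j (marker x A)"
  by (auto simp: marker_def intro: lcf_mono)

lemma marker_simps [simp]:
  "tFV (marker x A) = {}" "tatoms (marker x A) = ffv A \<union> {x}"
  "neutral (marker x A)" "normal (marker x A)" "\<not> beta (marker x A) w"
  by (auto simp: marker_def elim: beta_AppE)

lemma derivable_marker: "wf_form A \<Longrightarrow> derivable Map.empty (marker x A) A"
  unfolding marker_def
  by (rule derivable.impE; rule derivable.const) (simp_all add: wf_form_def)

lemma derivable_marker_inv: "derivable \<Gamma> (marker x A) B \<Longrightarrow> B = A"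
  unfolding marker_def by (elim derivable_AppE derivable_ConE) auto

section \<open>Replacing markers by variables\<close>

text \<open>\<open>Sim \<Gamma> M v\<close>: \<open>M\<close> arises from \<open>v\<close> by replacing, for variables \<open>x : A\<close> of \<open>\<Gamma>\<close>,
  eta-expansions of neutral terms headed by \<open>marker x A\<close> with neutral terms headed by \<open>x\<close>;
  \<open>SimNe\<close> relates the neutral terms themselves.\<close>

inductive Sim :: "ctx \<Rightarrow> trm \<Rightarrow> trm \<Rightarrow> bool" and SimNe :: "ctx \<Rightarrow> trm \<Rightarrow> trm \<Rightarrow> bool"
  for \<Gamma> :: ctx where
  Sim_FV: "y \<notin> dom \<Gamma> \<Longrightarrow> Sim \<Gamma> (FV y) (FV y)"
| Sim_BV: "Sim \<Gamma> (BV i) (BV i)"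
| Sim_Con: "Sim \<Gamma> (Con A) (Con A)"
| Sim_Lam: "Sim \<Gamma> P P' \<Longrightarrow> Sim \<Gamma> (Lam P) (Lam P')"
| Sim_App: "Sim \<Gamma> P P' \<Longrightarrow> Sim \<Gamma> Q Q' \<Longrightarrow> Sim \<Gamma> (App P Q) (App P' Q')"
| Sim_TLam: "Sim \<Gamma> P P' \<Longrightarrow> Sim \<Gamma> (TLam P) (TLam P')"
| Sim_TApp: "Sim \<Gamma> P P' \<Longrightarrow> Sim \<Gamma> (TApp P a) (TApp P' a)"
| Sim_eta: "SimNe \<Gamma> M n \<Longrightarrow> Sim \<Gamma> M (eta C n)"
| SimNe_marker: "\<Gamma> x = Some A \<Longrightarrow> SimNe \<Gamma> (FV x) (marker x A)"
| SimNe_App: "SimNe \<Gamma> M n \<Longrightarrow> Sim \<Gamma> N s \<Longrightarrow> SimNe \<Gamma> (App M N) (App n s)"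
| SimNe_TApp: "SimNe \<Gamma> M n \<Longrightarrow> SimNe \<Gamma> (TApp M a) (TApp n a)"

lemma SimNe_neutral: "SimNe \<Gamma> M n \<Longrightarrow> neutral n"
  by (induction M arbitrary: n) (auto elim: SimNe.cases)

lemma SimNe_not_abs: "SimNe \<Gamma> M n \<Longrightarrow> (\<forall>b. M \<noteq> Lam b) \<and> (\<forall>b. M \<noteq> TLam b)"
  by (erule SimNe.cases) auto

lemma Sim_LamD: "Sim \<Gamma> (Lam P) v \<Longrightarrow> \<exists>b. v = Lam b \<and> Sim \<Gamma> P b"
  by (erule Sim.cases) (auto dest: SimNe_not_abs)

lemma Sim_TLamD: "Sim \<Gamma> (TLam P) v \<Longrightarrow> \<exists>b. v = TLam b \<and> Sim \<Gamma> P b"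
  by (erule Sim.cases) (auto dest: SimNe_not_abs)

lemma Sim_topen:
  assumes "wf_ctx \<Gamma>" "Sim \<Gamma> N N'" "lct 0 0 N'"
  shows "Sim \<Gamma> P P' \<Longrightarrow> Sim \<Gamma> (topen k N P) (topen k N' P')"
    and "SimNe \<Gamma> M n \<Longrightarrow> SimNe \<Gamma> (topen k N M) (topen k N' n)"
proof (induction arbitrary: k and k rule: Sim_SimNe.inducts)
  case (Sim_BV i)
  then show ?case using assms(2) by (auto intro: Sim_SimNe.intros)
next
  case (Sim_eta M n C)
  then show ?case using eta_topen[OF assms(3)] by (auto intro: Sim_SimNe.intros)
next
  case (SimNe_marker x A)
  have "topen k N' (marker x A) = marker x A"
    using lct_marker wf_ctx_wf_form[OF assms(1) SimNe_marker] topen_lct_id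
    by (metis le0 wf_form_def)
  then show ?case using SimNe_marker by (auto intro: Sim_SimNe.intros)
qed (auto intro: Sim_SimNe.intros)

lemma Sim_ttopen:
  assumes "wf_ctx \<Gamma>"
  shows "Sim \<Gamma> P P' \<Longrightarrow> Sim \<Gamma> (ttopen j Y P) (ttopen j Y P')"
    and "SimNe \<Gamma> M n \<Longrightarrow> SimNe \<Gamma> (ttopen j Y M) (ttopen j Y n)"
proof (induction arbitrary: j and j rule: Sim_SimNe.inducts)
  case (Sim_eta M n C)
  then show ?case by (auto simp: eta_ttopen intro: Sim_SimNe.intros)
next
  case (SimNe_marker x A)
  have "ttopen j Y (marker x A) = marker x A"
    using lct_marker wf_ctx_wf_form[OF assms SimNe_marker] ttopen_lct_id
    by (metis le0 wf_form_def)
  then show ?case using SimNe_marker by (auto intro: Sim_SimNe.intros)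
qed (auto intro: Sim_SimNe.intros)

lemma Sim_tclose:
  assumes "y \<notin> dom \<Gamma>"
  shows "Sim \<Gamma> P P' \<Longrightarrow> Sim \<Gamma> (tclose k y P) (tclose k y P')"
    and "SimNe \<Gamma> M n \<Longrightarrow> SimNe \<Gamma> (tclose k y M) (tclose k y n)"
proof (induction arbitrary: k and k rule: Sim_SimNe.inducts)
  case (Sim_eta M n C)
  then show ?case by (auto simp: eta_tclose intro: Sim_SimNe.intros)
next
  case (SimNe_marker x A)
  then have "x \<noteq> y" using assms by auto
  then show ?case using SimNe_marker by (auto simp: tclose_fresh intro: Sim_SimNe.intros)
qed (auto intro: Sim_SimNe.intros)

text \<open>Closing an atom must leave the markers alone, hence \<open>X \<notin> dom \<Gamma>\<close>.\<close>

lemma Sim_ttclose: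
  assumes "X \<notin> PFV \<Gamma>" "X \<notin> dom \<Gamma>"
  shows "Sim \<Gamma> P P' \<Longrightarrow> Sim \<Gamma> (ttclose j X P) (ttclose j X P')"
    and "SimNe \<Gamma> M n \<Longrightarrow> SimNe \<Gamma> (ttclose j X M) (ttclose j X n)"
proof (induction arbitrary: j and j rule: Sim_SimNe.inducts)
  case (Sim_eta M n C)
  then show ?case by (auto simp: eta_ttclose intro: Sim_SimNe.intros)
next
  case (SimNe_marker x A)
  then have "X \<notin> ffv A" "X \<noteq> x" using assms by (auto simp: PFV_def intro: ranI)
  then show ?case using SimNe_marker by (auto simp: ttclose_fresh intro: Sim_SimNe.intros)
qed (auto intro: Sim_SimNe.intros)

lemma Sim_normal:
  shows "Sim \<Gamma> M v \<Longrightarrow> normal v \<Longrightarrow> normal M"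
    and "SimNe \<Gamma> M n \<Longrightarrow> normal n \<Longrightarrow> normal M"
proof (induction rule: Sim_SimNe.inducts)
  case (Sim_App P P' Q Q')
  then show ?case by (auto dest: Sim_LamD)
next
  case (Sim_TApp P P' a)
  then show ?case by (auto dest: Sim_TLamD)
next
  case (Sim_eta M n C)
  then show ?case using normal_eta_imp_normal by blast
next
  case (SimNe_App M n N s)
  then show ?case using SimNe_not_abs[of \<Gamma> M n] by simp
next
  case (SimNe_TApp M n a)
  then show ?case using SimNe_not_abs[of \<Gamma> M n] by simp
qed auto

definition marker_subst :: "ctx \<Rightarrow> nat \<Rightarrow> trm" where
  "marker_subst \<Gamma> x = (case \<Gamma> x of None \<Rightarrow> FV x | Some A \<Rightarrow> eta A (marker x A))"

lemma Sim_psubst_marker_subst: "Sim \<Gamma> t (psubst (marker_subst \<Gamma>) t)"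
proof (induction t)
  case (FV x)
  then show ?case by (cases "\<Gamma> x") (auto simp: marker_subst_def intro: Sim_SimNe.intros)
qed (auto intro: Sim_SimNe.intros)

definition Sim_lifts :: "ctx \<Rightarrow> trm \<Rightarrow> trm \<Rightarrow> bool" where
  "Sim_lifts \<Gamma> w w' \<longleftrightarrow> (\<forall>M. Sim \<Gamma> M w \<longrightarrow> wf_trm M \<longrightarrow> (\<exists>M'. beta\<^sup>=\<^sup>= M M' \<and> Sim \<Gamma> M' w'))"

definition SimNe_lifts :: "ctx \<Rightarrow> trm \<Rightarrow> trm \<Rightarrow> bool" where
  "SimNe_lifts \<Gamma> w w' \<longleftrightarrow> (\<forall>M. SimNe \<Gamma> M w \<longrightarrow> wf_trm M \<longrightarrow> (\<exists>M'. beta\<^sup>=\<^sup>= M M' \<and> SimNe \<Gamma> M' w'))"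

lemma SimNe_lifts_step:
  assumes IH: "\<And>v v'. size v < size w \<Longrightarrow> beta v v' \<Longrightarrow> Sim_lifts \<Gamma> v v' \<and> SimNe_lifts \<Gamma> v v'"
    and "beta w w'"
  shows "SimNe_lifts \<Gamma> w w'"
  unfolding SimNe_lifts_def
proof (intro HOL.allI HOL.impI)
  fix M assume "SimNe \<Gamma> M w" "wf_trm M"
  then show "\<exists>M'. beta\<^sup>=\<^sup>= M M' \<and> SimNe \<Gamma> M' w'"
  proof (cases rule: SimNe.cases)
    case (SimNe_marker x A)
    then show ?thesis using assms(2) by simp
  next
    case (SimNe_App M0 n N s)
    have wf: "wf_trm M0" "wf_trm N" using \<open>wf_trm M\<close> SimNe_App(1) by (auto simp: wf_trm_def)
    have "neutral n" using SimNe_neutral[OF SimNe_App(3)] .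
    from assms(2)[unfolded SimNe_App(2)] show ?thesis
    proof (cases rule: beta_AppE)
      case (1 b)
      then show ?thesis using \<open>neutral n\<close> by simp
    next
      case (2 n')
      then have "SimNe_lifts \<Gamma> n n'" using IH SimNe_App(2) by simp
      then obtain M0' where "beta\<^sup>=\<^sup>= M0 M0'" "SimNe \<Gamma> M0' n'"
        using SimNe_App(3) wf(1) unfolding SimNe_lifts_def by blast
      then show ?thesis using 2 SimNe_App wf(2)
        by (auto intro: beta.cong_appL Sim_SimNe.SimNe_App)
    next
      case (3 s')
      then have "Sim_lifts \<Gamma> s s'" using IH SimNe_App(2) by simp
      then obtain N' where "beta\<^sup>=\<^sup>= N N'" "Sim \<Gamma> N' s'"
        using SimNe_App(4) wf(2) unfolding Sim_lifts_def by blast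
      then show ?thesis using 3 SimNe_App wf(1)
        by (auto intro: beta.cong_appR Sim_SimNe.SimNe_App)
    qed
  next
    case (SimNe_TApp M0 n a)
    have wf: "wf_trm M0" using \<open>wf_trm M\<close> SimNe_TApp(1) by (auto simp: wf_trm_def)
    obtain Y where Y: "a = FA Y" using wf_TApp_FA \<open>wf_trm M\<close> SimNe_TApp(1) by blast
    have "neutral n" using SimNe_neutral[OF SimNe_TApp(3)] .
    with assms(2)[unfolded SimNe_TApp(2)] obtain n' where "beta n n'" "w' = TApp n' a"
      by (elim beta_TAppE) auto
    then have "SimNe_lifts \<Gamma> n n'" using IH SimNe_TApp(2) by simp
    then obtain M0' where "beta\<^sup>=\<^sup>= M0 M0'" "SimNe \<Gamma> M0' n'"
      using SimNe_TApp(3) wf unfolding SimNe_lifts_def by blast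
    then show ?thesis using \<open>w' = TApp n' a\<close> SimNe_TApp(1) Y
      by (auto intro: beta.cong_tapp Sim_SimNe.SimNe_TApp)
  qed
qed

lemma Sim_lifts_Lam:
  assumes "wf_ctx \<Gamma>"
    and IH: "\<And>v v'. size v < size (Lam P') \<Longrightarrow> beta v v' \<Longrightarrow> Sim_lifts \<Gamma> v v'"
    and "beta (Lam P') w'" "Sim \<Gamma> P P'" "wf_trm (Lam P)"
  shows "\<exists>M'. beta\<^sup>=\<^sup>= (Lam P) M' \<and> Sim \<Gamma> M' w'"
proof -
  obtain b' L where b': "w' = Lam b'" "finite L"
    "\<And>y. y \<notin> L \<Longrightarrow> beta (topen 0 (FV y) P') (topen 0 (FV y) b')"
    using assms(3) by (auto elim: beta_LamE)
  have "finite (L \<union> dom \<Gamma> \<union> tFV P \<union> tFV b')" using b'(2) assms(1) by (simp add: wf_ctx_def)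
  then obtain y where y: "y \<notin> L \<union> dom \<Gamma> \<union> tFV P \<union> tFV b'" by (rule obtain_fresh)
  have "Sim_lifts \<Gamma> (topen 0 (FV y) P') (topen 0 (FV y) b')" using IH b'(3) y by simp
  moreover have "Sim \<Gamma> (FV y) (FV y)" using y by (auto intro: Sim_FV)
  then have "Sim \<Gamma> (topen 0 (FV y) P) (topen 0 (FV y) P')"
    using Sim_topen(1)[OF assms(1) _ _ assms(4)] by simp
  moreover have "wf_trm (topen 0 (FV y) P)"
    using assms(5) lct_topen[of 0 0 P "FV y"] by (simp add: wf_trm_def)
  ultimately obtain M where M: "beta\<^sup>=\<^sup>= (topen 0 (FV y) P) M" "Sim \<Gamma> M (topen 0 (FV y) b')"
    unfolding Sim_lifts_def by blast
  have "y \<notin> dom \<Gamma>" using y by simp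
  then have "Sim \<Gamma> (tclose 0 y M) (tclose 0 y (topen 0 (FV y) b'))"
    using M(2) by (rule Sim_tclose(1))
  then have "Sim \<Gamma> (Lam (tclose 0 y M)) w'"
    using y b'(1) by (auto simp: tclose_topen intro: Sim_Lam)
  moreover have "beta\<^sup>=\<^sup>= (Lam P) (Lam (tclose 0 y M))"
    using M(1) beta.cong_lam[of "topen 0 (FV y) P" M y] y by (auto simp: tclose_topen)
  ultimately show ?thesis by blast
qed

lemma Sim_lifts_TLam:
  assumes "wf_ctx \<Gamma>"
    and IH: "\<And>v v'. size v < size (TLam P') \<Longrightarrow> beta v v' \<Longrightarrow> Sim_lifts \<Gamma> v v'"
    and "beta (TLam P') w'" "Sim \<Gamma> P P'" "wf_trm (TLam P)"
  shows "\<exists>M'. beta\<^sup>=\<^sup>= (TLam P) M' \<and> Sim \<Gamma> M' w'"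
proof -
  obtain b' L where b': "w' = TLam b'" "finite L"
    "\<And>Y. Y \<notin> L \<Longrightarrow> beta (ttopen 0 Y P') (ttopen 0 Y b')"
    using assms(3) by (auto elim: beta_TLamE)
  have "finite (L \<union> PFV \<Gamma> \<union> dom \<Gamma> \<union> tatoms P \<union> tatoms b')"
    using b'(2) assms(1) finite_PFV by (simp add: wf_ctx_def)
  then obtain Y where Y: "Y \<notin> L \<union> PFV \<Gamma> \<union> dom \<Gamma> \<union> tatoms P \<union> tatoms b'"
    by (rule obtain_fresh)
  have "Sim_lifts \<Gamma> (ttopen 0 Y P') (ttopen 0 Y b')" using IH b'(3) Y by simp
  moreover have "Sim \<Gamma> (ttopen 0 Y P) (ttopen 0 Y P')"
    using Sim_ttopen(1)[OF assms(1) assms(4)] .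
  moreover have "wf_trm (ttopen 0 Y P)"
    using assms(5) lct_ttopen[of 0 0 P Y] by (simp add: wf_trm_def)
  ultimately obtain M where M: "beta\<^sup>=\<^sup>= (ttopen 0 Y P) M" "Sim \<Gamma> M (ttopen 0 Y b')"
    unfolding Sim_lifts_def by blast
  have "Y \<notin> PFV \<Gamma>" "Y \<notin> dom \<Gamma>" using Y by auto
  then have "Sim \<Gamma> (ttclose 0 Y M) (ttclose 0 Y (ttopen 0 Y b'))"
    using M(2) by (rule Sim_ttclose(1))
  then have "Sim \<Gamma> (TLam (ttclose 0 Y M)) w'"
    using Y b'(1) by (auto simp: ttclose_ttopen intro: Sim_TLam)
  moreover have "beta\<^sup>=\<^sup>= (TLam P) (TLam (ttclose 0 Y M))"
    using M(1) beta.cong_tlam[of "ttopen 0 Y P" M Y] Y by (auto simp: ttclose_ttopen)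
  ultimately show ?thesis by blast
qed

lemma Sim_lifts_App:
  assumes "wf_ctx \<Gamma>"
    and IH: "\<And>v v'. size v < size (App P' Q') \<Longrightarrow> beta v v' \<Longrightarrow> Sim_lifts \<Gamma> v v'"
    and "beta (App P' Q') w'" "Sim \<Gamma> P P'" "Sim \<Gamma> Q Q'" "wf_trm (App P Q)"
  shows "\<exists>M'. beta\<^sup>=\<^sup>= (App P Q) M' \<and> Sim \<Gamma> M' w'"
  using assms(3)
proof (cases rule: beta_AppE)
  case (1 b)
  have lQ': "lct 0 0 Q'" using beta_wf[OF assms(3)] by (simp add: wf_trm_def)
  from assms(4)[unfolded 1(1)] show ?thesis
  proof (cases rule: Sim.cases)
    case (Sim_Lam P0)
    have "beta (App P Q) (topen 0 Q P0)" using beta.beta_lam[of P0 Q] assms(6) Sim_Lam(1) by simp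
    moreover have "Sim \<Gamma> (topen 0 Q P0) w'"
      using Sim_topen(1)[OF assms(1) assms(5) lQ' Sim_Lam(2)] 1(2) by simp
    ultimately show ?thesis by blast
  next
    case (Sim_eta n C)
    then obtain C' where "b = eta C' (App (tshift 0 n) (BV 0))"
      using eta_eq_LamD SimNe_neutral by metis
    moreover have "lct 0 0 n" using beta_wf[OF assms(3)] 1(1) Sim_eta(1) lct_eta_rev[of 0 0 C n]
      by (simp add: wf_trm_def)
    ultimately have "w' = eta C' (App n Q')" using 1(2) eta_Imp_topen lQ' by simp
    moreover have "SimNe \<Gamma> (App P Q) (App n Q')" using Sim_eta(2) assms(5) by (rule SimNe_App)
    ultimately show ?thesis using Sim_SimNe.Sim_eta by blast
  qed
next
  case (2 P'')
  have "wf_trm P" "wf_trm Q" using assms(6) by (auto simp: wf_trm_def)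
  moreover have "Sim_lifts \<Gamma> P' P''" using IH 2(1) by simp
  ultimately obtain P3 where "beta\<^sup>=\<^sup>= P P3" "Sim \<Gamma> P3 P''"
    using assms(4) unfolding Sim_lifts_def by blast
  then show ?thesis using 2(2) assms(5) \<open>wf_trm Q\<close> by (auto intro: beta.cong_appL Sim_App)
next
  case (3 Q'')
  have "wf_trm P" "wf_trm Q" using assms(6) by (auto simp: wf_trm_def)
  moreover have "Sim_lifts \<Gamma> Q' Q''" using IH 3(1) by simp
  ultimately obtain Q3 where "beta\<^sup>=\<^sup>= Q Q3" "Sim \<Gamma> Q3 Q''"
    using assms(5) unfolding Sim_lifts_def by blast
  then show ?thesis using 3(2) assms(4) \<open>wf_trm P\<close> by (auto intro: beta.cong_appR Sim_App)
qed

lemma Sim_lifts_TApp: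
  assumes "wf_ctx \<Gamma>"
    and IH: "\<And>v v'. size v < size (TApp P' a) \<Longrightarrow> beta v v' \<Longrightarrow> Sim_lifts \<Gamma> v v'"
    and "beta (TApp P' a) w'" "Sim \<Gamma> P P'" "wf_trm (TApp P a)"
  shows "\<exists>M'. beta\<^sup>=\<^sup>= (TApp P a) M' \<and> Sim \<Gamma> M' w'"
  using assms(3)
proof (cases rule: beta_TAppE)
  case (1 b Y)
  from assms(4)[unfolded 1(1)] show ?thesis
  proof (cases rule: Sim.cases)
    case (Sim_TLam P0)
    have "beta (TApp P a) (ttopen 0 Y P0)" using beta.beta_tlam[of P0 Y] assms(5) Sim_TLam(1) 1(2)
      by simp
    moreover have "Sim \<Gamma> (ttopen 0 Y P0) w'" using Sim_ttopen(1)[OF assms(1) Sim_TLam(2)] 1(3)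
      by simp
    ultimately show ?thesis by blast
  next
    case (Sim_eta n C)
    then obtain A where "b = eta A (TApp (ttshift 0 n) (BA 0))"
      using eta_eq_TLamD SimNe_neutral by metis
    moreover have "lct 0 0 n" using beta_wf[OF assms(3)] 1(1) Sim_eta(1) lct_eta_rev[of 0 0 C n]
      by (simp add: wf_trm_def)
    ultimately have "w' = eta A (TApp n (FA Y))" using 1(3) eta_All_ttopen by simp
    moreover have "SimNe \<Gamma> (TApp P a) (TApp n (FA Y))" using Sim_eta(2) 1(2) by (simp add: SimNe_TApp)
    ultimately show ?thesis using Sim_SimNe.Sim_eta by blast
  qed
next
  case (2 P'')
  obtain Y where "a = FA Y" using wf_TApp_FA assms(5) by blast
  have "wf_trm P" using assms(5) by (simp add: wf_trm_def)
  moreover have "Sim_lifts \<Gamma> P' P''" using IH 2(1) by simp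
  ultimately obtain P3 where "beta\<^sup>=\<^sup>= P P3" "Sim \<Gamma> P3 P''"
    using assms(4) unfolding Sim_lifts_def by blast
  then show ?thesis using 2(2) \<open>a = FA Y\<close> by (auto intro: beta.cong_tapp Sim_TApp)
qed

lemma Sim_lifts_eta:
  assumes IH: "\<And>v v'. size v < size (eta C n) \<Longrightarrow> beta v v' \<Longrightarrow> SimNe_lifts \<Gamma> v v'"
    and "SimNe_lifts \<Gamma> (eta C n) w'"
    and "beta (eta C n) w'" "SimNe \<Gamma> M n" "wf_trm M"
  shows "\<exists>M'. beta\<^sup>=\<^sup>= M M' \<and> Sim \<Gamma> M' w'"
proof -
  obtain n' where n': "w' = eta C n'" "beta n n'"
    using beta_eta_inv SimNe_neutral[OF assms(4)] assms(3) by blast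
  have "SimNe_lifts \<Gamma> n n'"
  proof (cases "\<exists>a. C = At a")
    case True
    then show ?thesis using assms(2) n' by auto
  next
    case False
    then show ?thesis using IH n'(2) size_lt_eta by blast
  qed
  then obtain M' where "beta\<^sup>=\<^sup>= M M'" "SimNe \<Gamma> M' n'"
    using assms(4,5) unfolding SimNe_lifts_def by blast
  then show ?thesis using n'(1) Sim_SimNe.Sim_eta by blast
qed

lemma beta_lifts_Sim:
  assumes "wf_ctx \<Gamma>"
  shows "beta w w' \<Longrightarrow> Sim_lifts \<Gamma> w w' \<and> SimNe_lifts \<Gamma> w w'"
proof (induction w arbitrary: w' rule: measure_induct_rule[of size])
  case (less w)
  have IH: "Sim_lifts \<Gamma> v v'" "SimNe_lifts \<Gamma> v v'" if "size v < size w" "beta v v'" for v v'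
    using less.IH that by blast+
  have SimNe_lifts: "SimNe_lifts \<Gamma> w w'" using SimNe_lifts_step[OF _ less.prems] IH by blast
  have "Sim_lifts \<Gamma> w w'"
    unfolding Sim_lifts_def
  proof (intro HOL.allI HOL.impI)
    fix M assume "Sim \<Gamma> M w" and wfM: "wf_trm M"
    then show "\<exists>M'. beta\<^sup>=\<^sup>= M M' \<and> Sim \<Gamma> M' w'"
    proof (cases rule: Sim.cases)
      case (Sim_Lam P P')
      show ?thesis
        using Sim_lifts_Lam[OF assms IH(1)[unfolded Sim_Lam(2)]] Sim_Lam less.prems wfM by simp
    next
      case (Sim_App P P' Q Q')
      show ?thesis
        using Sim_lifts_App[OF assms IH(1)[unfolded Sim_App(2)]] Sim_App less.prems wfM by simp
    next
      case (Sim_TLam P P')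
      show ?thesis
        using Sim_lifts_TLam[OF assms IH(1)[unfolded Sim_TLam(2)]] Sim_TLam less.prems wfM by simp
    next
      case (Sim_TApp P P' a)
      show ?thesis
        using Sim_lifts_TApp[OF assms IH(1)[unfolded Sim_TApp(2)]] Sim_TApp less.prems wfM by simp
    next
      case (Sim_eta n C)
      show ?thesis
        using Sim_lifts_eta[OF IH(2)[unfolded Sim_eta(2)]] SimNe_lifts Sim_eta less.prems wfM by simp
    qed (use less.prems in auto)
  qed
  then show ?case using SimNe_lifts by blast
qed

lemma betas_lifts_Sim:
  assumes "wf_ctx \<Gamma>"
  shows "betas w v \<Longrightarrow> Sim \<Gamma> M w \<Longrightarrow> wf_trm M \<Longrightarrow> \<exists>M'. betas M M' \<and> Sim \<Gamma> M' v"
proof (induction arbitrary: M rule: rtranclp_induct)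
  case (step v v')
  then obtain M1 where M1: "betas M M1" "Sim \<Gamma> M1 v" by blast
  moreover have "wf_trm M1" using betas_wf[OF M1(1) step.prems(2)] .
  ultimately obtain M2 where "beta\<^sup>=\<^sup>= M1 M2" "Sim \<Gamma> M2 v'"
    using beta_lifts_Sim[OF assms step.hyps(2)] unfolding Sim_lifts_def by blast
  then show ?case using M1(1) by (auto intro: rtranclp.rtrancl_into_rtrancl)
qed blast

lemma SimNe_derivable:
  assumes "wf_ctx \<Gamma>"
    and IH: "\<And>v' \<Delta> A M. size v' < size v \<Longrightarrow> derivable \<Delta> v' A \<Longrightarrow> Sim \<Gamma> M v' \<Longrightarrow>
      dom \<Gamma> \<inter> dom \<Delta> = {} \<Longrightarrow> derivable (\<Gamma> ++ \<Delta>) M A"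
  shows "SimNe \<Gamma> M n \<Longrightarrow> size n \<le> size v \<Longrightarrow> derivable \<Delta> n A \<Longrightarrow> dom \<Gamma> \<inter> dom \<Delta> = {} \<Longrightarrow>
    derivable (\<Gamma> ++ \<Delta>) M A"
proof (induction n arbitrary: M A)
  case (App n0 s)
  from App.prems(1) show ?case
  proof (cases rule: SimNe.cases)
    case (SimNe_marker x A0)
    have "A = A0" using App.prems(3) SimNe_marker(2) derivable_marker_inv by metis
    moreover have "wf_ctx \<Delta>" using derivable_wf App.prems(3) by blast
    moreover have "x \<notin> dom \<Delta>" using App.prems(4) SimNe_marker(3) by auto
    ultimately show ?thesis using derivable.ax[OF wf_ctx_map_add[OF assms(1)]] SimNe_marker
      by (simp add: map_add_dom_app_simps(3))
  next
    case (SimNe_App M0 N)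
    obtain A' where A': "derivable \<Delta> n0 (Imp A' A)" "derivable \<Delta> s A'"
      using App.prems(3) by (elim derivable_AppE)
    have "derivable (\<Gamma> ++ \<Delta>) M0 (Imp A' A)"
      using App.IH(1)[OF SimNe_App(2) _ A'(1) App.prems(4)] App.prems(2) by simp
    moreover have "derivable (\<Gamma> ++ \<Delta>) N A'"
      using IH[OF _ A'(2) SimNe_App(3) App.prems(4)] App.prems(2) by simp
    ultimately show ?thesis using derivable.impE SimNe_App(1) by blast
  qed
next
  case (TApp n0 a)
  from TApp.prems(1) show ?case
  proof (cases rule: SimNe.cases)
    case (SimNe_TApp M0)
    obtain Y F where YF: "a = FA Y" "derivable \<Delta> n0 (All F)" "A = fopen 0 Y F"
      using TApp.prems(3) by (elim derivable_TAppE) auto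
    have "derivable (\<Gamma> ++ \<Delta>) M0 (All F)"
      using TApp.IH[OF SimNe_TApp(2) _ YF(2) TApp.prems(4)] TApp.prems(2) by simp
    then show ?thesis using derivable.allE SimNe_TApp(1) YF by blast
  qed (simp add: marker_def)
qed (auto elim: SimNe.cases simp: marker_def)

lemma Sim_derivable_Lam:
  assumes "wf_ctx \<Gamma>"
    and IH: "\<And>v' \<Delta> A M. size v' < size (Lam P') \<Longrightarrow> derivable \<Delta> v' A \<Longrightarrow> Sim \<Gamma> M v' \<Longrightarrow>
      dom \<Gamma> \<inter> dom \<Delta> = {} \<Longrightarrow> derivable (\<Gamma> ++ \<Delta>) M A"
    and "derivable \<Delta> (Lam P') C" "Sim \<Gamma> P P'" "dom \<Gamma> \<inter> dom \<Delta> = {}"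
  shows "derivable (\<Gamma> ++ \<Delta>) (Lam P) C"
proof -
  obtain A B L where C: "C = Imp A B" "wf_form A" "finite L"
    "\<And>z. z \<notin> L \<Longrightarrow> derivable (\<Delta>(z \<mapsto> A)) (topen 0 (FV z) P') B"
    using assms(3) by (auto elim: derivable_LamE)
  have "wf_ctx \<Delta>" using derivable_wf assms(3) by blast
  then have "finite (L \<union> dom \<Gamma> \<union> dom \<Delta> \<union> tFV P)" using C(3) assms(1) by (simp add: wf_ctx_def)
  then obtain z where z: "z \<notin> L \<union> dom \<Gamma> \<union> dom \<Delta> \<union> tFV P" by (rule obtain_fresh)
  have "Sim \<Gamma> (FV z) (FV z)" using z by (auto intro: Sim_FV)
  then have "Sim \<Gamma> (topen 0 (FV z) P) (topen 0 (FV z) P')"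
    using Sim_topen(1)[OF assms(1) _ _ assms(4)] by simp
  moreover have "dom \<Gamma> \<inter> dom (\<Delta>(z \<mapsto> A)) = {}" using assms(5) z by auto
  moreover have "derivable (\<Delta>(z \<mapsto> A)) (topen 0 (FV z) P') B" using C(4) z by simp
  ultimately have "derivable (\<Gamma> ++ \<Delta>(z \<mapsto> A)) (topen 0 (FV z) P) B"
    using IH[of "topen 0 (FV z) P'" "\<Delta>(z \<mapsto> A)" B "topen 0 (FV z) P"] by simp
  then have "derivable ((\<Gamma> ++ \<Delta>)(z \<mapsto> A)) (topen 0 (FV z) P) B" by simp
  moreover have "z \<notin> dom (\<Gamma> ++ \<Delta>)" using z by simp
  ultimately have "derivable (\<Gamma> ++ \<Delta>) (Lam (tclose 0 z (topen 0 (FV z) P))) (Imp A B)"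
    using derivable.impI[OF _ C(2)] by blast
  then show ?thesis using z C(1) by (simp add: tclose_topen)
qed

lemma Sim_derivable_TLam:
  assumes "wf_ctx \<Gamma>"
    and IH: "\<And>v' \<Delta> A M. size v' < size (TLam P') \<Longrightarrow> derivable \<Delta> v' A \<Longrightarrow> Sim \<Gamma> M v' \<Longrightarrow>
      dom \<Gamma> \<inter> dom \<Delta> = {} \<Longrightarrow> derivable (\<Gamma> ++ \<Delta>) M A"
    and "derivable \<Delta> (TLam P') C" "Sim \<Gamma> P P'" "dom \<Gamma> \<inter> dom \<Delta> = {}"
  shows "derivable (\<Gamma> ++ \<Delta>) (TLam P) C"
proof -
  obtain A L where C: "C = All A" "finite L"
    "\<And>X. X \<notin> L \<Longrightarrow> derivable \<Delta> (ttopen 0 X P') (fopen 0 X A)"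
    using assms(3) by (auto elim: derivable_TLamE)
  have "wf_ctx \<Delta>" using derivable_wf assms(3) by blast
  then have "finite (L \<union> PFV \<Gamma> \<union> PFV \<Delta> \<union> tatoms P \<union> ffv A)"
    using C(2) finite_PFV assms(1) by simp
  then obtain X where X: "X \<notin> L \<union> PFV \<Gamma> \<union> PFV \<Delta> \<union> tatoms P \<union> ffv A" by (rule obtain_fresh)
  have "Sim \<Gamma> (ttopen 0 X P) (ttopen 0 X P')" using Sim_ttopen(1)[OF assms(1,4)] .
  moreover have "derivable \<Delta> (ttopen 0 X P') (fopen 0 X A)" using C(3) X by simp
  ultimately have "derivable (\<Gamma> ++ \<Delta>) (ttopen 0 X P) (fopen 0 X A)"
    using IH[of "ttopen 0 X P'" \<Delta> "fopen 0 X A" "ttopen 0 X P"] assms(5) by simp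
  moreover have "X \<notin> PFV (\<Gamma> ++ \<Delta>)" using X PFV_map_add by blast
  ultimately have "derivable (\<Gamma> ++ \<Delta>) (TLam (ttclose 0 X (ttopen 0 X P))) (All (fclose 0 X (fopen 0 X A)))"
    by (rule derivable.allI)
  then show ?thesis using X C(1) by (simp add: ttclose_ttopen fclose_fopen)
qed

lemma Sim_derivable:
  assumes "wf_ctx \<Gamma>"
  shows "derivable \<Delta> v A \<Longrightarrow> Sim \<Gamma> M v \<Longrightarrow> dom \<Gamma> \<inter> dom \<Delta> = {} \<Longrightarrow> derivable (\<Gamma> ++ \<Delta>) M A"
proof (induction v arbitrary: \<Delta> M A rule: measure_induct_rule[of size])
  case (less v)
  have wf: "wf_ctx (\<Gamma> ++ \<Delta>)" using wf_ctx_map_add[OF assms] derivable_wf less.prems(1) by blast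
  from less.prems(2) show ?case
  proof (cases rule: Sim.cases)
    case (Sim_FV y)
    then have "(\<Gamma> ++ \<Delta>) y = Some A" using less.prems(1) by (auto elim: derivable_FVE)
    from derivable.ax[OF wf this] show ?thesis using Sim_FV by simp
  next
    case (Sim_BV i)
    then show ?thesis using less.prems(1) by (auto elim: derivable_BVE)
  next
    case (Sim_Con F)
    then have "F = A" "wf_form A" using less.prems(1) derivable_wf by (auto elim: derivable_ConE)
    then show ?thesis using derivable.const[OF wf] Sim_Con by simp
  next
    case (Sim_Lam P P')
    then show ?thesis using Sim_derivable_Lam[OF assms less.IH] less.prems by simp
  next
    case (Sim_App P P' Q Q')
    obtain B where B: "derivable \<Delta> P' (Imp B A)" "derivable \<Delta> Q' B"
      using less.prems(1) Sim_App(2) by (auto elim: derivable_AppE)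
    have "derivable (\<Gamma> ++ \<Delta>) P (Imp B A)"
      using less.IH[OF _ B(1) Sim_App(3) less.prems(3)] Sim_App(2) by simp
    moreover have "derivable (\<Gamma> ++ \<Delta>) Q B"
      using less.IH[OF _ B(2) Sim_App(4) less.prems(3)] Sim_App(2) by simp
    ultimately show ?thesis using derivable.impE Sim_App(1) by blast
  next
    case (Sim_TLam P P')
    then show ?thesis using Sim_derivable_TLam[OF assms less.IH] less.prems by simp
  next
    case (Sim_TApp P P' a)
    have "derivable \<Delta> (TApp P' a) A" using less.prems(1) Sim_TApp(2) by simp
    then obtain Y F where YF: "a = FA Y" "derivable \<Delta> P' (All F)" "A = fopen 0 Y F"
      by (elim derivable_TAppE) auto
    have "derivable (\<Gamma> ++ \<Delta>) P (All F)"
      using less.IH[OF _ YF(2) Sim_TApp(3) less.prems(3)] Sim_TApp(2) by simp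
    then show ?thesis using derivable.allE Sim_TApp(1) YF by blast
  next
    case (Sim_eta n C)
    have "derivable \<Delta> n A"
      using derivable_eta_inv SimNe_neutral[OF Sim_eta(2)] less.prems(1) Sim_eta(1) by blast
    moreover have "size n \<le> size v" using Sim_eta(1) size_eta by simp
    ultimately show ?thesis
      using SimNe_derivable[OF assms less.IH Sim_eta(2)] less.prems(3) by simp
  qed
qed

lemma marker_instance_normal_form:
  assumes "wf_ctx \<Gamma>" "wf_trm t"
    and "betas (psubst (marker_subst \<Gamma>) t) v" "normal v" "derivable Map.empty v A"
  shows "\<exists>s. betas t s \<and> normal s \<and> derivable \<Gamma> s A"
proof -
  obtain s where s: "betas t s" "Sim \<Gamma> s v"
    using betas_lifts_Sim[OF assms(1,3) Sim_psubst_marker_subst assms(2)] by blast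
  have "normal s" using Sim_normal(1)[OF s(2) assms(4)] .
  moreover have "derivable (\<Gamma> ++ Map.empty) s A" using Sim_derivable[OF assms(1,5) s(2)] by simp
  ultimately show ?thesis using s(1) by auto
qed

section \<open>Reflection and reification\<close>

definition normalizes_to_neutral :: "form \<Rightarrow> trm \<Rightarrow> bool" where
  "normalizes_to_neutral C N \<longleftrightarrow>
    closed N \<and> (\<exists>n. betas N n \<and> normal n \<and> neutral n \<and> derivable Map.empty n C)"

definition reflects :: "form \<Rightarrow> bool" where
  "reflects C \<longleftrightarrow> (\<forall>N. normalizes_to_neutral C N \<longrightarrow> qIv C (eta C N))"

definition reifies :: "form \<Rightarrow> bool" where
  "reifies C \<longleftrightarrow> (\<forall>t. closed t \<longrightarrow> qIv C t \<longrightarrow> (\<exists>s. betas t s \<and> normal s \<and> derivable Map.empty s C))"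

lemma closed_psubst: "wf_trm t \<Longrightarrow> \<forall>x\<in>tFV t. closed (\<sigma> x) \<Longrightarrow> closed (psubst \<sigma> t)"
  by (auto simp: closed_def wf_trm_def tFV_psubst intro: lct_psubst)

lemma normalizes_to_neutral_marker: "wf_form A \<Longrightarrow> normalizes_to_neutral A (marker x A)"
  unfolding normalizes_to_neutral_def
  by (auto simp: closed_def wf_trm_def wf_form_def lct_marker derivable_marker)

lemma reflects_At: "reflects (At a)"
  by (auto simp: reflects_def normalizes_to_neutral_def)

lemma reifies_At: "reifies (At a)"
  by (auto simp: reifies_def)

lemma reflects_Imp:
  assumes "reifies B" "reflects C"
  shows "reflects (Imp B C)"
  unfolding reflects_def
proof (intro HOL.allI HOL.impI)
  fix N assume "normalizes_to_neutral (Imp B C) N"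
  then obtain n where n: "closed N" "betas N n" "normal n" "neutral n" "derivable Map.empty n (Imp B C)"
    unfolding normalizes_to_neutral_def by blast
  have "qIv C (eta C (App N s))" if s: "closed s" "qIv B s" for s
  proof -
    obtain s' where s': "betas s s'" "normal s'" "derivable Map.empty s' B"
      using assms(1) s unfolding reifies_def by blast
    have "wf_trm s" "wf_trm n" using s(1) n(1,2) betas_wf by (auto simp: closed_def)
    then have "betas (App N s) (App n s')"
      using betas_appL[OF n(2)] betas_appR[OF s'(1)] by (meson rtranclp_trans)
    then have "normalizes_to_neutral C (App N s)"
      using n s s' unfolding normalizes_to_neutral_def
      by (auto simp: closed_def wf_trm_def intro!: exI[of _ "App n s'"] intro: derivable.impE)
    then show ?thesis using assms(2) unfolding reflects_def by blast
  qed
  then show "qIv (Imp B C) (eta (Imp B C) N)"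
    using n(1) by (auto simp: closed_def wf_trm_def eta_Imp_topen)
qed

lemma reflects_All:
  assumes "\<And>Y. reflects (fopen 0 Y A)"
  shows "reflects (All A)"
  unfolding reflects_def
proof (intro HOL.allI HOL.impI)
  fix N assume "normalizes_to_neutral (All A) N"
  then obtain n where n: "closed N" "betas N n" "normal n" "neutral n" "derivable Map.empty n (All A)"
    unfolding normalizes_to_neutral_def by blast
  have "normalizes_to_neutral (fopen 0 Y A) (TApp N (FA Y))" for Y
    using n betas_tapp[OF n(2)] unfolding normalizes_to_neutral_def
    by (auto simp: closed_def wf_trm_def intro!: exI[of _ "TApp n (FA Y)"] intro: derivable.allE)
  then have "qIv (fopen 0 Y A) (eta (fopen 0 Y A) (TApp N (FA Y)))" for Y
    using assms unfolding reflects_def by blast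
  then show "qIv (All A) (eta (All A) N)"
    using n(1) by (auto simp: closed_def wf_trm_def eta_All_ttopen)
qed

text \<open>To reify a function, apply it to the reflected marker of a fresh variable, reify the
  result and abstract the variable again; the simulation turns the marker back into the variable.\<close>

lemma reifies_Imp:
  assumes "wf_form B" "reflects B" "reifies C"
  shows "reifies (Imp B C)"
  unfolding reifies_def
proof (intro HOL.allI HOL.impI)
  fix t assume "closed t" "qIv (Imp B C) t"
  then obtain u where u: "betas t (Lam u)" "\<And>s. closed s \<Longrightarrow> qIv B s \<Longrightarrow> qIv C (topen 0 s u)"
    by auto
  have lu: "lct (Suc 0) 0 u" "tFV u = {}"
    using betas_wf[OF u(1)] betas_tFV[OF u(1)] \<open>closed t\<close> by (auto simp: closed_def wf_trm_def)
  define x :: nat where "x = 0"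
  define \<Gamma> :: ctx where "\<Gamma> = Map.empty(x \<mapsto> B)"
  let ?e = "eta B (marker x B)"
  have "closed ?e" using assms(1) by (simp add: closed_def wf_trm_def wf_form_def lct_eta lct_marker)
  moreover have "qIv B ?e"
    using assms(2) normalizes_to_neutral_marker[OF assms(1)] by (simp add: reflects_def)
  ultimately have "qIv C (topen 0 ?e u)" "closed (topen 0 ?e u)"
    using u(2) lct_topen[OF lu(1)] tFV_topen[of 0 ?e u] lu(2) by (auto simp: closed_def wf_trm_def)
  then obtain v where v: "betas (topen 0 ?e u) v" "normal v" "derivable Map.empty v C"
    using assms(3) unfolding reifies_def by blast
  have "topen 0 ?e u = psubst (marker_subst \<Gamma>) (topen 0 (FV x) u)"
    using lu(2) by (simp add: psubst_topen_closed marker_subst_def \<Gamma>_def)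
  moreover have "wf_ctx \<Gamma>" using assms(1) by (simp add: \<Gamma>_def wf_ctx_upd)
  moreover have "wf_trm (topen 0 (FV x) u)" using lct_topen[OF lu(1)] by (simp add: wf_trm_def)
  ultimately obtain s where s: "betas (topen 0 (FV x) u) s" "normal s" "derivable \<Gamma> s C"
    using marker_instance_normal_form v by metis
  have "derivable Map.empty (Lam (tclose 0 x s)) (Imp B C)"
    using derivable.impI[of x Map.empty B s C] s(3) assms(1) by (simp add: \<Gamma>_def)
  moreover have "betas t (Lam (tclose 0 x s))"
    using u(1) betas_lam[OF s(1), of x] tclose_topen[of x u 0] lu(2) by simp
  ultimately show "\<exists>s. betas t s \<and> normal s \<and> derivable Map.empty s (Imp B C)"
    using normal_tclose[OF s(2)] by auto
qed

lemma reifies_All: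
  assumes "\<And>Y. reifies (fopen 0 Y A)"
  shows "reifies (All A)"
  unfolding reifies_def
proof (intro HOL.allI HOL.impI)
  fix t assume "closed t" "qIv (All A) t"
  then obtain u where u: "betas t (TLam u)" "\<And>Y. qIv (fopen 0 Y A) (ttopen 0 Y u)"
    by auto
  have lu: "lct 0 (Suc 0) u" "tFV u = {}"
    using betas_wf[OF u(1)] betas_tFV[OF u(1)] \<open>closed t\<close> by (auto simp: closed_def wf_trm_def)
  have "finite (tatoms u \<union> ffv A)" by simp
  then obtain Y where Y: "Y \<notin> tatoms u \<union> ffv A" by (rule obtain_fresh)
  have "closed (ttopen 0 Y u)" using lct_ttopen[OF lu(1)] lu(2) by (simp add: closed_def wf_trm_def)
  then obtain v where v: "betas (ttopen 0 Y u) v" "normal v" "derivable Map.empty v (fopen 0 Y A)"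
    using assms u(2) unfolding reifies_def by blast
  have "derivable Map.empty (TLam (ttclose 0 Y v)) (All (fclose 0 Y (fopen 0 Y A)))"
    using derivable.allI[OF v(3)] by (simp add: PFV_def)
  then have "derivable Map.empty (TLam (ttclose 0 Y v)) (All A)" using Y by (simp add: fclose_fopen)
  moreover have "betas t (TLam (ttclose 0 Y v))"
    using u(1) betas_tlam[OF v(1), of Y] ttclose_ttopen[of Y u 0] Y by simp
  ultimately show "\<exists>s. betas t s \<and> normal s \<and> derivable Map.empty s (All A)"
    using normal_ttclose[OF v(2)] by auto
qed

lemma reflects_reifies: "wf_form C \<Longrightarrow> reflects C \<and> reifies C"
proof (induction C rule: measure_induct_rule[of size])
  case (less C)
  show ?case
  proof (cases C)
    case (At a)
    then show ?thesis by (simp add: reflects_At reifies_At)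
  next
    case (Imp B C')
    then have "reflects B \<and> reifies B" "reflects C' \<and> reifies C'" "wf_form B"
      using less by (auto simp: wf_form_def)
    then show ?thesis using Imp reflects_Imp reifies_Imp by blast
  next
    case (All A)
    then have "reflects (fopen 0 Y A) \<and> reifies (fopen 0 Y A)" for Y
      using less lcf_fopen by (auto simp: wf_form_def)
    then show ?thesis using All reflects_All reifies_All by blast
  qed
qed

lemma qIv_eta_marker: "wf_form A \<Longrightarrow> closed (eta A (marker x A)) \<and> qIv A (eta A (marker x A))"
  using reflects_reifies normalizes_to_neutral_marker
  by (auto simp: reflects_def closed_def wf_trm_def wf_form_def lct_eta lct_marker)

lemma qIv_normal_form:
  "wf_form A \<Longrightarrow> closed t \<Longrightarrow> qIv A t \<Longrightarrow> \<exists>s. betas t s \<and> normal s \<and> derivable Map.empty s A"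
  using reflects_reifies by (auto simp: reifies_def)

theorem mainTheorem2:
  fixes S :: "nat set" and \<Gamma> :: ctx and t :: trm and A :: form
  assumes "wf_ctx \<Gamma>" and "wf_form A" and "wf_trm t"
    and "tFV t \<subseteq> dom \<Gamma>"
    and "I_valid S \<Gamma> t A"
  shows "\<exists>s. normal s \<and> proof_term S s \<and> betas t s \<and> derivable \<Gamma> s A"
proof -
  let ?\<sigma> = "marker_subst \<Gamma>"
  have \<sigma>: "closed (?\<sigma> x) \<and> qIv (the (\<Gamma> x)) (?\<sigma> x)" if "x \<in> dom \<Gamma>" for x
    using that qIv_eta_marker wf_ctx_wf_form[OF assms(1)] by (auto simp: marker_subst_def)
  then have "qIv A (psubst ?\<sigma> t)" using assms(5) by (simp add: I_valid_def qIv_ctx_def)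
  moreover have "closed (psubst ?\<sigma> t)" using closed_psubst \<sigma> assms(3,4) by blast
  ultimately obtain v where "betas (psubst ?\<sigma> t) v" "normal v" "derivable Map.empty v A"
    using qIv_normal_form[OF assms(2)] by blast
  then obtain s where "betas t s" "normal s" "derivable \<Gamma> s A"
    using marker_instance_normal_form[OF assms(1,3)] by blast
  moreover have "proof_term S s"
    using betas_proof_term \<open>betas t s\<close> assms(5) by (auto simp: I_valid_def)
  ultimately show ?thesis by blast
qed

end
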